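(* Let $G$ be a finite simple graph and $\Bbbk$ a field. Then $$\operatorname{reg}_{\Bbbk}(G)=\max\Big\{\sum_{i=1}^{r}\operatorname{reg}_{\Bbbk}(H_i)\;:\;\{H_1,\dots,H_r\}\text{ a prime decomposition of }G\text{ over }\Bbbk\Big\},$$ where the empty family ($r=0$, empty sum $0$) is allowed.
   Context: All graphs are finite and simple. For a graph $G$, $\operatorname{Ind}(G)$ is its independence complex (faces are the independent vertex sets), and $G[S]$ is the induced subgraph on $S\subseteq V(G)$. The regularity of $G$ over a field $\Bbbk$ is $\operatorname{reg}_{\Bbbk}(G)=\max\{j\ge 0:\widetilde H_{j-1}(\operatorname{Ind}(G[S]);\Bbbk)\neq 0\text{ for some }S\subseteq V(G)\}$, where $\operatorname{Ind}$ of the graph on the empty vertex set is $\{\emptyset\}$ with $\widetilde H_{-1}=\Bbbk$; equivalently $\operatorname{reg}_{\Bbbk}(G)=\operatorname{reg}(R/I(G))$ for the edge ideal $I(G)$. A connected graph $H$ is a prime graph over $\Bbbk$ if $\operatorname{reg}_{\Bbbk}(H-x)<\operatorname{reg}_{\Bbbk}(H)$ for every vertex $x$ of $H$. A prime decomposition of $G$ over $\Bbbk$ is a family $\{H_1,\dots,H_r\}$ of pairwise vertex-disjoint induced subgraphs of $G$, each a prime graph over $\Bbbk$, such that $G$ has no edge joining vertices of two different $H_i$ (i.e. $G[\bigcup_i V(H_i)]$ is the disjoint union of the $H_i$). *)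

theory Defs
  imports Main
begin

text \<open>A graph is given by a finite vertex set V and a symmetric irreflexive
edge relation E. Induced subgraphs G[S] are represented by their vertex set S.\<close>

definition ind_face :: "('a \<Rightarrow> 'a \<Rightarrow> bool) \<Rightarrow> 'a set \<Rightarrow> 'a set \<Rightarrow> bool" where
  "ind_face E S F \<longleftrightarrow> F \<subseteq> S \<and> (\<forall>u\<in>F. \<forall>v\<in>F. \<not> E u v)"

text \<open>Simplicial chains of Ind(G[S]) over the field 'k with j vertices per face
(i.e. of dimension j-1; j = 0 is the empty face, giving the augmented complex).\<close>
definition is_chain :: "('a \<Rightarrow> 'a \<Rightarrow> bool) \<Rightarrow> 'a set \<Rightarrow> nat \<Rightarrow> ('a set \<Rightarrow> 'k::field) \<Rightarrow> bool" where
  "is_chain E S j c \<longleftrightarrow> (\<forall>F. c F \<noteq> 0 \<longrightarrow> ind_face E S F \<and> card F = j)"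

text \<open>Simplicial boundary map with respect to the linear order on vertices:
the coefficient of tau in the boundary of sigma = insert v tau is (-1)^i,
where i is the position of v in sigma.\<close>
definition bd :: "'a::linorder set \<Rightarrow> ('a set \<Rightarrow> 'k::field) \<Rightarrow> 'a set \<Rightarrow> 'k" where
  "bd S c \<tau> = (\<Sum>v\<in>S - \<tau>. (-1) ^ card {u\<in>\<tau>. u < v} * c (insert v \<tau>))"

text \<open>Reduced homology of Ind(G[S]) in degree j-1 over 'k is nonzero.\<close>
definition hom_nz :: "'k::field itself \<Rightarrow> ('a::linorder \<Rightarrow> 'a \<Rightarrow> bool) \<Rightarrow> 'a set \<Rightarrow> nat \<Rightarrow> bool" where
  "hom_nz K E S j \<longleftrightarrow>
     (\<exists>z :: 'a set \<Rightarrow> 'k. is_chain E S j z \<and> (\<forall>\<tau>. bd S z \<tau> = 0) \<and>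
        \<not> (\<exists>c :: 'a set \<Rightarrow> 'k. is_chain E S (Suc j) c \<and> (\<forall>\<tau>. bd S c \<tau> = z \<tau>)))"

definition reg :: "'k::field itself \<Rightarrow> ('a::linorder \<Rightarrow> 'a \<Rightarrow> bool) \<Rightarrow> 'a set \<Rightarrow> nat" where
  "reg K E V = Max {j. \<exists>S\<subseteq>V. hom_nz K E S j}"

definition connected_graph :: "('a \<Rightarrow> 'a \<Rightarrow> bool) \<Rightarrow> 'a set \<Rightarrow> bool" where
  "connected_graph E W \<longleftrightarrow> W \<noteq> {} \<and>
     (\<forall>u\<in>W. \<forall>v\<in>W. (\<lambda>x y. x \<in> W \<and> y \<in> W \<and> E x y)\<^sup>*\<^sup>* u v)"

definition prime_graph :: "'k::field itself \<Rightarrow> ('a::linorder \<Rightarrow> 'a \<Rightarrow> bool) \<Rightarrow> 'a set \<Rightarrow> bool" where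
  "prime_graph K E W \<longleftrightarrow> connected_graph E W \<and>
     (\<forall>x\<in>W. reg K E (W - {x}) < reg K E W)"

definition prime_decomp :: "'k::field itself \<Rightarrow> ('a::linorder \<Rightarrow> 'a \<Rightarrow> bool) \<Rightarrow> 'a set \<Rightarrow> 'a set set \<Rightarrow> bool" where
  "prime_decomp K E V \<H> \<longleftrightarrow>
     (\<forall>W\<in>\<H>. W \<subseteq> V \<and> prime_graph K E W) \<and>
     (\<forall>W1\<in>\<H>. \<forall>W2\<in>\<H>. W1 \<noteq> W2 \<longrightarrow> W1 \<inter> W2 = {} \<and>
        (\<forall>u\<in>W1. \<forall>v\<in>W2. \<not> E u v))"

end

theory Submission
  imports Defs
begin

text \<open>If there are no edges between disjoint vertex sets \<open>A\<close> and \<open>B\<close>, the independence complex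
of \<open>G[A \<union> B]\<close> is the join of those of \<open>G[A]\<close> and \<open>G[B]\<close>, so its augmented chain complex is the
tensor product of theirs. Over a field the Kunneth formula then shows that reduced homology of
degree \<open>n - 1\<close> occurs on \<open>A \<union> B\<close> exactly when it occurs in degrees \<open>p - 1\<close> on \<open>A\<close> and \<open>q - 1\<close>
on \<open>B\<close> with \<open>p + q = n\<close>; hence regularity is additive over such splittings. Consequently the
regularities in a prime decomposition add up to the regularity of the union of its members, which
is at most \<open>reg G\<close>. Conversely, a vertex-minimal \<open>S\<close> with \<open>reg G[S] = reg G\<close> is critical:
deleting any vertex lowers the regularity. By additivity, the connected components of a critical
graph are critical again, hence prime, and their regularities sum to \<open>reg G\<close>.\<close>

section \<open>Simplicial chains of independence complexes\<close>

lemma bd_add: "bd S (\<lambda>F. c1 F + c2 F) \<tau> = bd S c1 \<tau> + bd S c2 \<tau>"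
  by (simp add: bd_def sum.distrib algebra_simps)

lemma bd_diff: "bd S (\<lambda>F. c1 F - c2 F) \<tau> = bd S c1 \<tau> - bd S c2 \<tau>"
  by (simp add: bd_def sum_subtractf algebra_simps)

lemma bd_scale: "bd S (\<lambda>F. a * c F) \<tau> = a * bd S c \<tau>"
  by (simp add: bd_def sum_distrib_left algebra_simps)

lemma bd_zero: "bd S (\<lambda>F. 0) \<tau> = 0"
  by (simp add: bd_def)

lemma bd_sum: "bd S (\<lambda>F. \<Sum>i\<in>I. f i F) \<tau> = (\<Sum>i\<in>I. bd S (f i) \<tau>)"
  by (simp add: bd_def sum_distrib_left sum.swap[of _ I])

lemma bd_nonzeroD: "bd S c \<tau> \<noteq> 0 \<Longrightarrow> \<exists>v\<in>S - \<tau>. c (insert v \<tau>) \<noteq> 0"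
  unfolding bd_def by (metis (no_types, lifting) mult_zero_right sum.neutral)

lemma is_chain_zero: "is_chain E S n (\<lambda>F. 0)"
  unfolding is_chain_def by simp

lemma is_chain_add: "is_chain E S n c1 \<Longrightarrow> is_chain E S n c2 \<Longrightarrow> is_chain E S n (\<lambda>F. c1 F + c2 F)"
  unfolding is_chain_def by (metis add.right_neutral add_0)

lemma is_chain_scale: "is_chain E S n c \<Longrightarrow> is_chain E S n (\<lambda>F. a * c F)"
  unfolding is_chain_def by simp

lemma is_chain_vanishes: "is_chain E S n c \<Longrightarrow> \<not> X \<subseteq> S \<Longrightarrow> c X = 0"
  unfolding is_chain_def ind_face_def by blast

lemma bd_vanishes: "\<forall>X. \<not> X \<subseteq> S \<longrightarrow> c X = 0 \<Longrightarrow> \<not> X \<subseteq> S \<Longrightarrow> bd S c X = 0"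
  unfolding bd_def by (auto intro!: sum.neutral)

lemma is_chain_bd:
  assumes "is_chain E S (Suc j) c"
  shows "is_chain E S j (bd S c)"
  unfolding is_chain_def
proof (intro allI impI)
  fix F assume "bd S c F \<noteq> 0"
  then obtain v where v: "v \<in> S - F" "c (insert v F) \<noteq> 0" using bd_nonzeroD by blast
  with assms have "ind_face E S (insert v F)" "card (insert v F) = Suc j"
    unfolding is_chain_def by auto
  moreover have "finite F"
    using \<open>card (insert v F) = Suc j\<close> by (metis card.infinite finite_insert nat.distinct(1))
  ultimately show "ind_face E S F \<and> card F = j" using v unfolding ind_face_def by auto
qed

lemma card_less_insert:
  assumes "finite \<tau>" "v \<notin> \<tau>"
  shows "card {x\<in>insert v \<tau>. x < u} = card {x\<in>\<tau>. x < u} + (if v < u then 1 else 0)"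
proof -
  have "{x\<in>insert v \<tau>. x < u} = (if v < u then insert v {x\<in>\<tau>. x < u} else {x\<in>\<tau>. x < u})"
    by auto
  then show ?thesis using assms by auto
qed

text \<open>The coefficient of \<open>c (\<tau> \<union> {u, v})\<close> in \<open>bd S (bd S c) \<tau>\<close> arises twice, once by
removing \<open>u\<close> first and once by removing \<open>v\<close> first, with opposite signs.\<close>
lemma bd_bd:
  fixes c :: "'a::linorder set \<Rightarrow> 'k::field"
  assumes "finite S" "finite \<tau>"
  shows "bd S (bd S c) \<tau> = 0"
proof -
  define T where "T = S - \<tau>"
  define s where "s = (\<lambda>v. (-1::'k) ^ card {u\<in>\<tau>. u < v})"
  define h where "h = (\<lambda>v u. s v * s u * (if v < u then -1 else 1) * c (insert u (insert v \<tau>)))"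
  have fT: "finite T" using assms T_def by auto
  have eq1: "bd S (bd S c) \<tau> = (\<Sum>v\<in>T. \<Sum>u\<in>T - {v}. h v u)"
    unfolding bd_def T_def
  proof (rule sum.cong[OF refl])
    fix v assume v: "v \<in> S - \<tau>"
    have ee: "S - insert v \<tau> = S - \<tau> - {v}" by blast
    have "(-1::'k) ^ card {u\<in>\<tau>. u < v} * (\<Sum>va\<in>S - insert v \<tau>. (-1) ^ card {u\<in>insert v \<tau>. u < va} * c (insert va (insert v \<tau>)))
        = (\<Sum>u\<in>S - \<tau> - {v}. s v * ((-1) ^ card {x\<in>insert v \<tau>. x < u} * c (insert u (insert v \<tau>))))"
      unfolding ee s_def sum_distrib_left by (rule refl)
    also have "\<dots> = (\<Sum>u\<in>S - \<tau> - {v}. h v u)"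
    proof (rule sum.cong[OF refl])
      fix u assume u: "u \<in> S - \<tau> - {v}"
      have "card {x\<in>insert v \<tau>. x < u} = card {x\<in>\<tau>. x < u} + (if v < u then 1 else 0)"
        using card_less_insert[OF assms(2)] v by blast
      then show "s v * ((-1) ^ card {x\<in>insert v \<tau>. x < u} * c (insert u (insert v \<tau>))) = h v u"
        by (simp add: h_def s_def power_add)
    qed
    finally show "(-1::'k) ^ card {u\<in>\<tau>. u < v} * (\<Sum>va\<in>S - insert v \<tau>. (-1) ^ card {u\<in>insert v \<tau>. u < va} * c (insert va (insert v \<tau>)))
        = (\<Sum>u\<in>S - \<tau> - {v}. h v u)" .
  qed
  have split: "\<And>v. (\<Sum>u\<in>T - {v}. h v u) = (\<Sum>u\<in>{u\<in>T. v < u}. h v u) + (\<Sum>u\<in>{u\<in>T. u < v}. h v u)"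
  proof -
    fix v
    have e: "T - {v} = {u\<in>T. v < u} \<union> {u\<in>T. u < v}" by auto
    have d: "{u\<in>T. v < u} \<inter> {u\<in>T. u < v} = {}" by auto
    show "(\<Sum>u\<in>T - {v}. h v u) = (\<Sum>u\<in>{u\<in>T. v < u}. h v u) + (\<Sum>u\<in>{u\<in>T. u < v}. h v u)"
      unfolding e by (rule sum.union_disjoint) (use fT d in auto)
  qed
  have swap: "(\<Sum>v\<in>T. \<Sum>u\<in>{u\<in>T. u < v}. h v u) = (\<Sum>u\<in>T. \<Sum>v\<in>{v\<in>T. u < v}. h v u)"
    using sum.swap_restrict[OF fT fT, of "\<lambda>v u. h v u" "\<lambda>v u. u < v"] by simp
  have anti: "h u v = - h v u" if vu: "v < u" for v u
  proof -
    have "\<not> u < v" using vu by simp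
    then show ?thesis unfolding h_def using vu by (simp add: insert_commute)
  qed
  have "bd S (bd S c) \<tau> = (\<Sum>v\<in>T. \<Sum>u\<in>{u\<in>T. v < u}. h v u) + (\<Sum>v\<in>T. \<Sum>u\<in>{u\<in>T. u < v}. h v u)"
    using eq1 split by (simp add: sum.distrib)
  also have "\<dots> = (\<Sum>v\<in>T. \<Sum>u\<in>{u\<in>T. v < u}. h v u) + (\<Sum>v\<in>T. \<Sum>u\<in>{u\<in>T. v < u}. h u v)"
    using swap by simp
  also have "\<dots> = (\<Sum>v\<in>T. \<Sum>u\<in>{u\<in>T. v < u}. h v u + h u v)"
    by (simp add: sum.distrib)
  also have "\<dots> = 0" using anti by (simp add: sum.neutral)
  finally show ?thesis .
qed

section \<open>Separating functionals\<close>

lemma functional_pivot: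
  fixes f b u :: "'x \<Rightarrow> 'k::field"
  assumes "finite D" "d0 \<notin> D" "b d0 = 1"
    and "(\<Sum>d\<in>D. f d * (u d - u d0 * b d)) = r"
  shows "(\<Sum>d\<in>insert d0 D. (f(d0 := - (\<Sum>d\<in>D. f d * b d))) d * u d) = r"
proof -
  have "(\<Sum>d\<in>D. (f(d0 := x)) d * u d) = (\<Sum>d\<in>D. f d * u d)" for x
    using assms(2) by (intro sum.cong) auto
  moreover have "(\<Sum>d\<in>D. f d * (u d - u d0 * b d)) = (\<Sum>d\<in>D. f d * u d) - u d0 * (\<Sum>d\<in>D. f d * b d)"
    by (simp add: right_diff_distrib sum_subtractf sum_distrib_left mult.left_commute)
  ultimately show ?thesis
    using assms by (simp add: sum.insert_remove)
qed

text \<open>Vectors are functions supported on the finite set \<open>D\<close>; functionals are given by their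
coefficients on \<open>D\<close>.\<close>
lemma separating_functional:
  fixes U :: "('x \<Rightarrow> 'k::field) set"
  assumes "finite D"
    and "\<forall>u\<in>U. \<forall>d. d \<notin> D \<longrightarrow> u d = 0"
    and "\<forall>u\<in>U. \<forall>v\<in>U. (\<lambda>d. u d + v d) \<in> U"
    and "\<forall>u\<in>U. \<forall>a. (\<lambda>d. a * u d) \<in> U"
    and "(\<lambda>d. 0) \<in> U"
    and "\<forall>d. d \<notin> D \<longrightarrow> z d = 0" and "z \<notin> U"
  shows "\<exists>f. (\<forall>u\<in>U. (\<Sum>d\<in>D. f d * u d) = 0) \<and> (\<Sum>d\<in>D. f d * z d) = 1"
  using assms
proof (induction D arbitrary: U z rule: finite_induct)
  case empty
  then have "z = (\<lambda>d. 0)" by auto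
  with empty show ?case by auto
next
  case (insert d0 D)
  note supp = insert.prems(1) and add = insert.prems(2) and scale = insert.prems(3)
    and zero = insert.prems(4) and z_supp = insert.prems(5) and z_notin = insert.prems(6)
  consider (pivot) b where "b \<in> U" "b d0 = 1" | (no_pivot) "\<forall>u\<in>U. u d0 = 0"
  proof (cases "\<exists>b\<in>U. b d0 \<noteq> 0")
    case True
    then obtain b where "b \<in> U" "b d0 \<noteq> 0" by blast
    then show thesis using scale by (intro that(1)[of "\<lambda>d. inverse (b d0) * b d"]) auto
  qed blast
  then show ?case
  proof cases
    case pivot
    define U' where "U' = {u\<in>U. u d0 = 0}"
    define z' where "z' d = z d - z d0 * b d" for d
    have reduce: "(\<lambda>d. u d - u d0 * b d) \<in> U" if "u \<in> U" for u
      using add[rule_format, OF that scale[rule_format, OF pivot(1), of "- u d0"]] by simp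
    have "\<exists>f. (\<forall>u\<in>U'. (\<Sum>d\<in>D. f d * u d) = 0) \<and> (\<Sum>d\<in>D. f d * z' d) = 1"
    proof (rule insert.IH)
      show "\<forall>u\<in>U'. \<forall>d. d \<notin> D \<longrightarrow> u d = 0"
        using supp unfolding U'_def by (metis (mono_tags, lifting) insertE mem_Collect_eq)
      show "\<forall>u\<in>U'. \<forall>v\<in>U'. (\<lambda>d. u d + v d) \<in> U'" using add unfolding U'_def by simp
      show "\<forall>u\<in>U'. \<forall>a. (\<lambda>d. a * u d) \<in> U'" using scale unfolding U'_def by simp
      show "(\<lambda>d. 0) \<in> U'" using zero unfolding U'_def by simp
      show "\<forall>d. d \<notin> D \<longrightarrow> z' d = 0"
      proof (intro allI impI)
        fix d assume "d \<notin> D"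
        then consider "d = d0" | "d \<notin> insert d0 D" by blast
        then show "z' d = 0"
          by cases (use pivot z_supp supp in \<open>simp_all add: z'_def\<close>)
      qed
      show "z' \<notin> U'"
      proof
        assume "z' \<in> U'"
        then have "(\<lambda>d. z' d + z d0 * b d) \<in> U"
          using add[rule_format, of z' "\<lambda>d. z d0 * b d"] scale pivot(1) unfolding U'_def by blast
        then show False using z_notin unfolding z'_def by simp
      qed
    qed
    then obtain f where f: "\<forall>u\<in>U'. (\<Sum>d\<in>D. f d * u d) = 0" "(\<Sum>d\<in>D. f d * z' d) = 1"
      by blast
    have "(\<Sum>d\<in>D. f d * (u d - u d0 * b d)) = 0" if "u \<in> U" for u
      using f(1) reduce[OF that] pivot(2) unfolding U'_def by simp
    then show ?thesis
      using functional_pivot[where b = b, OF insert.hyps pivot(2)] f(2) unfolding z'_def by blast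
  next
    case no_pivot
    show ?thesis
    proof (cases "z d0 = 0")
      case False
      define f where "f d = (if d = d0 then inverse (z d0) else 0)" for d
      have "(\<Sum>d\<in>insert d0 D. f d * u d) = inverse (z d0) * u d0" for u
        using insert.hyps by (simp add: f_def sum.neutral)
      then show ?thesis using no_pivot False by (intro exI[of _ f]) auto
    next
      case True
      have "\<exists>f. (\<forall>u\<in>U. (\<Sum>d\<in>D. f d * u d) = 0) \<and> (\<Sum>d\<in>D. f d * z d) = 1"
      proof (rule insert.IH)
        show "\<forall>u\<in>U. \<forall>d. d \<notin> D \<longrightarrow> u d = 0" using supp no_pivot by (metis insertE)
        show "\<forall>d. d \<notin> D \<longrightarrow> z d = 0" using z_supp True by (metis insertE)
      qed (use add scale zero z_notin in blast)+
      then obtain f where f: "\<forall>u\<in>U. (\<Sum>d\<in>D. f d * u d) = 0" "(\<Sum>d\<in>D. f d * z d) = 1"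
        by blast
      have "(\<Sum>d\<in>insert d0 D. f d * u d) = (\<Sum>d\<in>D. f d * u d)" if "u d0 = 0" for u :: "'x \<Rightarrow> 'k"
        using insert.hyps that by simp
      then show ?thesis using f no_pivot True by (intro exI[of _ f]) simp
    qed
  qed
qed

section \<open>Tensor products of chain complexes\<close>

text \<open>The tensor product of the augmented chain complexes of \<open>Ind(G[A])\<close> and \<open>Ind(G[B])\<close>:
a chain assigns coefficients to pairs of faces, and \<open>tensor_bd\<close> is the Koszul-signed
differential.\<close>
definition tensor_bd :: "'a::linorder set \<Rightarrow> 'a set \<Rightarrow> ('a set \<Rightarrow> 'a set \<Rightarrow> 'k::field) \<Rightarrow> 'a set \<Rightarrow> 'a set \<Rightarrow> 'k" where
  "tensor_bd A B c F G = bd A (\<lambda>F'. c F' G) F + (-1) ^ card F * bd B (c F) G"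

definition tensor_chain :: "('a \<Rightarrow> 'a \<Rightarrow> bool) \<Rightarrow> 'a set \<Rightarrow> 'a set \<Rightarrow> nat \<Rightarrow> ('a set \<Rightarrow> 'a set \<Rightarrow> 'k::field) \<Rightarrow> bool" where
  "tensor_chain E A B n c \<longleftrightarrow>
     (\<forall>F G. c F G \<noteq> 0 \<longrightarrow> ind_face E A F \<and> ind_face E B G \<and> card F + card G = n)"

definition tensor_boundary :: "('a::linorder \<Rightarrow> 'a \<Rightarrow> bool) \<Rightarrow> 'a set \<Rightarrow> 'a set \<Rightarrow> nat \<Rightarrow> ('a set \<Rightarrow> 'a set \<Rightarrow> 'k::field) \<Rightarrow> bool" where
  "tensor_boundary E A B n z \<longleftrightarrow> (\<exists>c. tensor_chain E A B (Suc n) c \<and> (\<forall>F G. tensor_bd A B c F G = z F G))"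

definition tensor_hom_nz :: "'k::field itself \<Rightarrow> ('a::linorder \<Rightarrow> 'a \<Rightarrow> bool) \<Rightarrow> 'a set \<Rightarrow> 'a set \<Rightarrow> nat \<Rightarrow> bool" where
  "tensor_hom_nz K E A B n \<longleftrightarrow>
     (\<exists>z :: 'a set \<Rightarrow> 'a set \<Rightarrow> 'k. tensor_chain E A B n z \<and> (\<forall>F G. tensor_bd A B z F G = 0) \<and>
        \<not> tensor_boundary E A B n z)"

lemma tensor_bd_add: "tensor_bd A B (\<lambda>F G. c1 F G + c2 F G) F G = tensor_bd A B c1 F G + tensor_bd A B c2 F G"
  unfolding tensor_bd_def by (simp add: bd_add algebra_simps)

lemma tensor_bd_diff: "tensor_bd A B (\<lambda>F G. c1 F G - c2 F G) F G = tensor_bd A B c1 F G - tensor_bd A B c2 F G"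
  unfolding tensor_bd_def by (simp add: bd_diff algebra_simps)

lemma tensor_bd_zero: "tensor_bd A B (\<lambda>F G. 0) F G = 0"
  unfolding tensor_bd_def by (simp add: bd_zero)

lemma tensor_chain_zero: "tensor_chain E A B n (\<lambda>F G. 0)"
  unfolding tensor_chain_def by simp

lemma tensor_chain_add:
  "tensor_chain E A B n c1 \<Longrightarrow> tensor_chain E A B n c2 \<Longrightarrow> tensor_chain E A B n (\<lambda>F G. c1 F G + c2 F G)"
  unfolding tensor_chain_def by (metis add.right_neutral add_0)

lemma tensor_chain_diff:
  "tensor_chain E A B n c1 \<Longrightarrow> tensor_chain E A B n c2 \<Longrightarrow> tensor_chain E A B n (\<lambda>F G. c1 F G - c2 F G)"
  unfolding tensor_chain_def by (metis diff_zero diff_self)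

lemma tensor_chain_slice: "tensor_chain E A B n c \<Longrightarrow> is_chain E A (n - card G) (\<lambda>F. c F G)"
  unfolding tensor_chain_def is_chain_def by (metis add_diff_cancel_right')

lemma tensor_chain_finite:
  "tensor_chain E A B n c \<Longrightarrow> finite A \<Longrightarrow> finite B \<Longrightarrow> c F G \<noteq> 0 \<Longrightarrow> finite F \<and> finite G"
  unfolding tensor_chain_def ind_face_def by (meson finite_subset)

lemma neg_one_power_square: "(-1::'k::field) ^ n * (-1) ^ n = 1"
  by (simp add: power_mult_distrib[symmetric])

lemma tensor_chain_tensor_bd:
  assumes "tensor_chain E A B (Suc n) c" "finite A" "finite B"
  shows "tensor_chain E A B n (tensor_bd A B c)"
  unfolding tensor_chain_def
proof (intro allI impI)
  fix F G assume "tensor_bd A B c F G \<noteq> 0"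
  then have "bd A (\<lambda>F'. c F' G) F \<noteq> 0 \<or> bd B (c F) G \<noteq> 0" unfolding tensor_bd_def by auto
  then show "ind_face E A F \<and> ind_face E B G \<and> card F + card G = n"
  proof
    assume "bd A (\<lambda>F'. c F' G) F \<noteq> 0"
    then obtain v where v: "v \<in> A - F" "c (insert v F) G \<noteq> 0" using bd_nonzeroD by blast
    then have "ind_face E A (insert v F) \<and> ind_face E B G \<and> card (insert v F) + card G = Suc n"
      using assms(1) unfolding tensor_chain_def by blast
    moreover have "finite F" using tensor_chain_finite[OF assms v(2)] by simp
    ultimately show ?thesis using v unfolding ind_face_def by auto
  next
    assume "bd B (c F) G \<noteq> 0"
    then obtain v where v: "v \<in> B - G" "c F (insert v G) \<noteq> 0" using bd_nonzeroD by blast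
    then have "ind_face E A F \<and> ind_face E B (insert v G) \<and> card F + card (insert v G) = Suc n"
      using assms(1) unfolding tensor_chain_def by blast
    moreover have "finite G" using tensor_chain_finite[OF assms v(2)] by simp
    ultimately show ?thesis using v unfolding ind_face_def by auto
  qed
qed

lemma tensor_bd_tensor_bd_finite:
  fixes c :: "'a::linorder set \<Rightarrow> 'a set \<Rightarrow> 'k::field"
  assumes "finite A" "finite B" "finite F" "finite G"
  shows "tensor_bd A B (tensor_bd A B c) F G = 0"
proof -
  define Y where "Y = (\<Sum>v\<in>A - F. (-1::'k) ^ card {u\<in>F. u < v} * bd B (c (insert v F)) G)"
  have a1: "bd A (\<lambda>F'. tensor_bd A B c F' G) F
      = bd A (\<lambda>F'. bd A (\<lambda>F''. c F'' G) F') F + bd A (\<lambda>F'. (-1) ^ card F' * bd B (c F') G) F"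
    unfolding tensor_bd_def by (rule bd_add)
  have a2: "bd A (\<lambda>F'. bd A (\<lambda>F''. c F'' G) F') F = 0" by (rule bd_bd[OF assms(1) assms(3)])
  have a3: "bd A (\<lambda>F'. (-1) ^ card F' * bd B (c F') G) F = - ((-1) ^ card F) * Y"
  proof -
    have "bd A (\<lambda>F'. (-1) ^ card F' * bd B (c F') G) F
        = (\<Sum>v\<in>A - F. (-1) ^ card {u\<in>F. u < v} * ((-1) ^ card (insert v F) * bd B (c (insert v F)) G))"
      unfolding bd_def by simp
    also have "\<dots> = (\<Sum>v\<in>A - F. - ((-1) ^ card F) * ((-1::'k) ^ card {u\<in>F. u < v} * bd B (c (insert v F)) G))"
      using assms(3) by (intro sum.cong) auto
    also have "\<dots> = - ((-1) ^ card F) * Y" unfolding Y_def by (simp add: sum_distrib_left)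
    finally show ?thesis .
  qed
  have b1: "bd B (tensor_bd A B c F) G
      = bd B (\<lambda>G'. bd A (\<lambda>F'. c F' G') F) G + bd B (\<lambda>G'. (-1) ^ card F * bd B (c F) G') G"
    unfolding tensor_bd_def by (rule bd_add)
  have b2: "bd B (\<lambda>G'. (-1) ^ card F * bd B (c F) G') G = 0"
    using bd_bd[OF assms(2) assms(4)] by (simp add: bd_scale)
  have b3: "bd B (\<lambda>G'. bd A (\<lambda>F'. c F' G') F) G = Y"
    unfolding Y_def bd_def by (simp add: sum_distrib_left sum.swap[of _ "B - G"] algebra_simps)
  show ?thesis
    unfolding tensor_bd_def[of A B "tensor_bd A B c" F G] a1 a2 a3 b1 b2 b3 by (simp add: algebra_simps)
qed

lemma tensor_bd_infinite:
  assumes "\<forall>F G. c F G \<noteq> 0 \<longrightarrow> finite F \<and> finite G" "infinite F \<or> infinite G"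
  shows "tensor_bd A B c F G = 0"
proof -
  have "bd A (\<lambda>F'. c F' G) F = 0" "bd B (c F) G = 0"
    unfolding bd_def using assms by (intro sum.neutral ballI, metis finite_insert mult_zero_right)+
  then show ?thesis unfolding tensor_bd_def by simp
qed

lemma tensor_bd_tensor_bd:
  assumes "tensor_chain E A B n c" "finite A" "finite B"
  shows "tensor_bd A B (tensor_bd A B c) F G = 0"
proof (cases "finite F \<and> finite G")
  case True then show ?thesis using tensor_bd_tensor_bd_finite assms by blast
next
  case False
  have "\<forall>F G. c F G \<noteq> 0 \<longrightarrow> finite F \<and> finite G" using tensor_chain_finite[OF assms] by blast
  then have "\<forall>F G. tensor_bd A B c F G \<noteq> 0 \<longrightarrow> finite F \<and> finite G" using tensor_bd_infinite by blast
  then show ?thesis using tensor_bd_infinite False by blast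
qed

section \<open>Independence complexes of joins\<close>

definition no_edges_between :: "('a \<Rightarrow> 'a \<Rightarrow> bool) \<Rightarrow> 'a set \<Rightarrow> 'a set \<Rightarrow> bool" where
  "no_edges_between E A B \<longleftrightarrow> (\<forall>u\<in>A. \<forall>v\<in>B. \<not> E u v \<and> \<not> E v u)"

lemma no_edges_between_mono:
  "no_edges_between E A B \<Longrightarrow> A' \<subseteq> A \<Longrightarrow> B' \<subseteq> B \<Longrightarrow> no_edges_between E A' B'"
  unfolding no_edges_between_def by blast

lemma no_edges_between_commute: "no_edges_between E A B \<longleftrightarrow> no_edges_between E B A"
  unfolding no_edges_between_def by blast

text \<open>For \<open>A \<inter> B = {}\<close>, a face of \<open>Ind(G[A \<union> B])\<close> is a pair of faces \<open>(F, G)\<close>; reordering the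
vertices of \<open>F \<union> G\<close> as \<open>F\<close> followed by \<open>G\<close> costs the sign of \<open>inversions F G\<close>. With this
sign, splitting identifies the chain complex of \<open>Ind(G[A \<union> B])\<close> with the tensor product.\<close>
definition inversions :: "'a::linorder set \<Rightarrow> 'a set \<Rightarrow> nat" where
  "inversions F G = card {(u, v). u \<in> F \<and> v \<in> G \<and> v < u}"

definition split_chain :: "'a::linorder set \<Rightarrow> 'a set \<Rightarrow> ('a set \<Rightarrow> 'k::field) \<Rightarrow> 'a set \<Rightarrow> 'a set \<Rightarrow> 'k" where
  "split_chain A B c F G = (if F \<subseteq> A \<and> G \<subseteq> B then (-1) ^ inversions F G * c (F \<union> G) else 0)"

definition merge_chain :: "'a::linorder set \<Rightarrow> 'a set \<Rightarrow> ('a set \<Rightarrow> 'a set \<Rightarrow> 'k::field) \<Rightarrow> 'a set \<Rightarrow> 'k" where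
  "merge_chain A B c X =
     (if X \<subseteq> A \<union> B then (-1) ^ inversions (X \<inter> A) (X \<inter> B) * c (X \<inter> A) (X \<inter> B) else 0)"

lemma inversions_insert_left:
  assumes "finite F" "finite G" "v \<notin> F"
  shows "inversions (insert v F) G = inversions F G + card {w\<in>G. w < v}"
proof -
  let ?P = "{(u, w). u \<in> F \<and> w \<in> G \<and> w < u}"
  have "{(u, w). u \<in> insert v F \<and> w \<in> G \<and> w < u} = ?P \<union> Pair v ` {w\<in>G. w < v}"
    by auto
  moreover have "finite ?P" by (rule finite_subset[of _ "F \<times> G"]) (use assms in auto)
  moreover have "?P \<inter> Pair v ` {w\<in>G. w < v} = {}" using assms(3) by auto
  moreover have "card (Pair v ` {w\<in>G. w < v}) = card {w\<in>G. w < v}"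
    by (rule card_image) (auto simp: inj_on_def)
  ultimately show ?thesis unfolding inversions_def using assms(2) by (simp add: card_Un_disjoint)
qed

lemma inversions_insert_right:
  assumes "finite F" "finite G" "v \<notin> G"
  shows "inversions F (insert v G) = inversions F G + card {u\<in>F. v < u}"
proof -
  let ?P = "{(u, w). u \<in> F \<and> w \<in> G \<and> w < u}"
  have "{(u, w). u \<in> F \<and> w \<in> insert v G \<and> w < u} = ?P \<union> (\<lambda>u. (u, v)) ` {u\<in>F. v < u}"
    by auto
  moreover have "finite ?P" by (rule finite_subset[of _ "F \<times> G"]) (use assms in auto)
  moreover have "?P \<inter> (\<lambda>u. (u, v)) ` {u\<in>F. v < u} = {}" using assms(3) by auto
  moreover have "card ((\<lambda>u. (u, v)) ` {u\<in>F. v < u}) = card {u\<in>F. v < u}"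
    by (rule card_image) (auto simp: inj_on_def)
  ultimately show ?thesis unfolding inversions_def using assms(1) by (simp add: card_Un_disjoint)
qed

lemma card_less_Un:
  assumes "finite F" "finite G" "F \<inter> G = {}"
  shows "card {u\<in>F \<union> G. u < v} = card {u\<in>F. u < v} + card {u\<in>G. u < v}"
proof -
  have "{u\<in>F \<union> G. u < v} = {u\<in>F. u < v} \<union> {u\<in>G. u < v}" by auto
  then show ?thesis using assms by (simp add: card_Un_disjoint disjoint_iff)
qed

lemma card_less_plus_card_greater:
  assumes "finite (F :: 'a::linorder set)" "v \<notin> F"
  shows "card F = card {u\<in>F. u < v} + card {u\<in>F. v < u}"
proof -
  have "F = {u\<in>F. u < v} \<union> {u\<in>F. v < u}" using assms(2) by (auto dest: not_less_iff_gr_or_eq[THEN iffD1])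
  then have "card F = card ({u\<in>F. u < v} \<union> {u\<in>F. v < u})" by simp
  also have "\<dots> = card {u\<in>F. u < v} + card {u\<in>F. v < u}"
    using assms(1) by (intro card_Un_disjoint) auto
  finally show ?thesis .
qed

text \<open>A vertex \<open>v \<in> A\<close> added to \<open>F \<union> G\<close> passes the vertices of \<open>G\<close> below it; a vertex \<open>v \<in> B\<close>
passes those of \<open>F\<close> above it, which together with \<open>(-1) ^ card F\<close> gives the sign of \<open>bd (A \<union> B)\<close>.\<close>
lemma split_chain_bd:
  fixes c :: "'a::linorder set \<Rightarrow> 'k::field"
  assumes fA: "finite A" and fB: "finite B" and dj: "A \<inter> B = {}"
  shows "split_chain A B (bd (A \<union> B) c) F G = tensor_bd A B (split_chain A B c) F G"
proof (cases "F \<subseteq> A \<and> G \<subseteq> B")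
  case False
  have "bd A (\<lambda>F'. split_chain A B c F' G) F = 0"
    unfolding bd_def split_chain_def using False by (intro sum.neutral ballI) auto
  moreover have "bd B (split_chain A B c F) G = 0"
    unfolding bd_def split_chain_def using False by (intro sum.neutral ballI) auto
  moreover have "split_chain A B (bd (A \<union> B) c) F G = 0"
    using False unfolding split_chain_def by meson
  ultimately show ?thesis unfolding tensor_bd_def by simp
next
  case True
  then have FA: "F \<subseteq> A" and GB: "G \<subseteq> B" by auto
  have fF: "finite F" using FA fA finite_subset by blast
  have fG: "finite G" using GB fB finite_subset by blast
  have FG: "F \<inter> G = {}" using FA GB dj by auto
  define t where "t v = (-1::'k) ^ inversions F G * ((-1) ^ card {u\<in>F \<union> G. u < v} * c (insert v (F \<union> G)))" for v
  have lhs: "split_chain A B (bd (A \<union> B) c) F G = (\<Sum>v\<in>A - F. t v) + (\<Sum>v\<in>B - G. t v)"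
  proof -
    have "(A \<union> B) - (F \<union> G) = (A - F) \<union> (B - G)" using FA GB dj by auto
    then have "split_chain A B (bd (A \<union> B) c) F G = (\<Sum>v\<in>(A - F) \<union> (B - G). t v)"
      unfolding split_chain_def bd_def t_def using True by (simp add: sum_distrib_left)
    also have "\<dots> = (\<Sum>v\<in>A - F. t v) + (\<Sum>v\<in>B - G. t v)"
      using fA fB dj by (intro sum.union_disjoint) auto
    finally show ?thesis .
  qed
  have rhs1: "bd A (\<lambda>F'. split_chain A B c F' G) F = (\<Sum>v\<in>A - F. t v)"
    unfolding bd_def
  proof (rule sum.cong[OF refl])
    fix v assume v: "v \<in> A - F"
    have "split_chain A B c (insert v F) G
        = (-1) ^ (inversions F G + card {w\<in>G. w < v}) * c (insert v (F \<union> G))"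
      unfolding split_chain_def using inversions_insert_left[OF fF fG, of v] v GB FA by auto
    then show "(-1) ^ card {u\<in>F. u < v} * split_chain A B c (insert v F) G = t v"
      unfolding t_def card_less_Un[OF fF fG FG] by (simp add: power_add algebra_simps)
  qed
  have rhs2: "(-1) ^ card F * bd B (split_chain A B c F) G = (\<Sum>v\<in>B - G. t v)"
    unfolding bd_def sum_distrib_left
  proof (rule sum.cong[OF refl])
    fix v assume v: "v \<in> B - G"
    have vF: "v \<notin> F" using v FA dj by auto
    have "split_chain A B c F (insert v G)
        = (-1) ^ (inversions F G + card {u\<in>F. v < u}) * c (insert v (F \<union> G))"
      unfolding split_chain_def using inversions_insert_right[OF fF fG, of v] v FA GB by auto
    then have "(-1) ^ card F * ((-1) ^ card {u\<in>G. u < v} * split_chain A B c F (insert v G))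
       = ((-1::'k) ^ card {u\<in>F. v < u} * (-1) ^ card {u\<in>F. v < u}) *
         ((-1) ^ inversions F G * ((-1) ^ card {u\<in>F. u < v} * (-1) ^ card {u\<in>G. u < v}) *
          c (insert v (F \<union> G)))"
      unfolding card_less_plus_card_greater[OF fF vF] by (simp add: power_add algebra_simps)
    also have "\<dots> = t v"
      unfolding t_def card_less_Un[OF fF fG FG] neg_one_power_square by (simp add: power_add algebra_simps)
    finally show "(-1) ^ card F * ((-1) ^ card {u\<in>G. u < v} * split_chain A B c F (insert v G)) = t v" .
  qed
  show ?thesis unfolding lhs tensor_bd_def rhs1 rhs2 ..
qed

lemma split_merge_chain:
  assumes "A \<inter> B = {}" "tensor_chain E A B n c"
  shows "split_chain A B (merge_chain A B c) = c"
proof (intro ext)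
  fix F G
  show "split_chain A B (merge_chain A B c) F G = c F G"
  proof (cases "F \<subseteq> A \<and> G \<subseteq> B")
    case True
    then have "(F \<union> G) \<inter> A = F" "(F \<union> G) \<inter> B = G" "F \<union> G \<subseteq> A \<union> B" using assms(1) by auto
    then show ?thesis using True unfolding split_chain_def merge_chain_def
      by (simp add: mult.assoc[symmetric] neg_one_power_square)
  next
    case False
    then have "c F G = 0" using assms(2) unfolding tensor_chain_def ind_face_def by blast
    then show ?thesis using False unfolding split_chain_def by auto
  qed
qed

lemma merge_split_chain:
  assumes "A \<inter> B = {}" "\<forall>X. \<not> X \<subseteq> A \<union> B \<longrightarrow> c X = 0"
  shows "merge_chain A B (split_chain A B c) = c"
proof (intro ext)
  fix X
  show "merge_chain A B (split_chain A B c) X = c X"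
  proof (cases "X \<subseteq> A \<union> B")
    case True
    then have "(X \<inter> A) \<union> (X \<inter> B) = X" by auto
    then show ?thesis using True unfolding split_chain_def merge_chain_def
      by (simp add: mult.assoc[symmetric] neg_one_power_square)
  next
    case False then show ?thesis using assms(2) unfolding merge_chain_def by auto
  qed
qed

lemma tensor_chain_split_chain:
  assumes "A \<inter> B = {}" "finite A" "finite B" "is_chain E (A \<union> B) n c"
  shows "tensor_chain E A B n (split_chain A B c)"
  unfolding tensor_chain_def
proof (intro allI impI)
  fix F G assume "split_chain A B c F G \<noteq> 0"
  then have FG: "F \<subseteq> A" "G \<subseteq> B" "c (F \<union> G) \<noteq> 0" unfolding split_chain_def by (auto split: if_splits)
  then have "ind_face E (A \<union> B) (F \<union> G)" "card (F \<union> G) = n" using assms(4) unfolding is_chain_def by auto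
  moreover have "card (F \<union> G) = card F + card G"
    using FG assms(1-3) finite_subset by (intro card_Un_disjoint) auto
  ultimately show "ind_face E A F \<and> ind_face E B G \<and> card F + card G = n"
    using FG unfolding ind_face_def by auto
qed

lemma is_chain_merge_chain:
  assumes "A \<inter> B = {}" "finite A" "finite B" "no_edges_between E A B" "tensor_chain E A B n c"
  shows "is_chain E (A \<union> B) n (merge_chain A B c)"
  unfolding is_chain_def
proof (intro allI impI)
  fix X assume "merge_chain A B c X \<noteq> 0"
  then have X: "X \<subseteq> A \<union> B" "c (X \<inter> A) (X \<inter> B) \<noteq> 0" unfolding merge_chain_def by (auto split: if_splits)
  then have faces: "ind_face E A (X \<inter> A)" "ind_face E B (X \<inter> B)" "card (X \<inter> A) + card (X \<inter> B) = n"
    using assms(5) unfolding tensor_chain_def by auto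
  have "X = (X \<inter> A) \<union> (X \<inter> B)" using X(1) by auto
  then have "card X = card (X \<inter> A) + card (X \<inter> B)"
    using assms(1-3) by (metis card_Un_disjoint finite_Int inf_commute inf_left_commute inf_bot_right)
  moreover have "ind_face E (A \<union> B) X"
    using X(1) faces(1,2) assms(4) unfolding ind_face_def no_edges_between_def by blast
  ultimately show "ind_face E (A \<union> B) X \<and> card X = n" using faces(3) by simp
qed

lemma bd_eq_iff_split_chain:
  fixes c z :: "'a::linorder set \<Rightarrow> 'k::field"
  assumes dj: "A \<inter> B = {}" and fA: "finite A" and fB: "finite B"
    and c: "\<forall>X. \<not> X \<subseteq> A \<union> B \<longrightarrow> c X = 0" and z: "\<forall>X. \<not> X \<subseteq> A \<union> B \<longrightarrow> z X = 0"
  shows "bd (A \<union> B) c = z \<longleftrightarrow> tensor_bd A B (split_chain A B c) = split_chain A B z"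
proof
  assume "bd (A \<union> B) c = z"
  then show "tensor_bd A B (split_chain A B c) = split_chain A B z"
    using split_chain_bd[OF fA fB dj, of c] by (intro ext) simp
next
  assume split_eq: "tensor_bd A B (split_chain A B c) = split_chain A B z"
  have "split_chain A B (bd (A \<union> B) c) = split_chain A B z"
    using split_chain_bd[OF fA fB dj, of c] split_eq by (intro ext) auto
  then have "merge_chain A B (split_chain A B (bd (A \<union> B) c)) = merge_chain A B (split_chain A B z)"
    by simp
  moreover have "\<forall>X. \<not> X \<subseteq> A \<union> B \<longrightarrow> bd (A \<union> B) c X = 0" using bd_vanishes[OF c] by blast
  ultimately show "bd (A \<union> B) c = z"
    using merge_split_chain[OF dj] z by metis
qed

lemma split_chain_zero: "split_chain A B (\<lambda>X. 0) = (\<lambda>F G. 0)"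
  unfolding split_chain_def by (simp add: fun_eq_iff)

lemma hom_nz_imp_tensor_hom_nz:
  fixes E :: "'a::linorder \<Rightarrow> 'a \<Rightarrow> bool"
  assumes dj: "A \<inter> B = {}" and fA: "finite A" and fB: "finite B" and ne: "no_edges_between E A B"
    and h: "hom_nz TYPE('k::field) E (A \<union> B) n"
  shows "tensor_hom_nz TYPE('k) E A B n"
proof -
  obtain z :: "'a set \<Rightarrow> 'k" where z: "is_chain E (A \<union> B) n z" "\<forall>\<tau>. bd (A \<union> B) z \<tau> = 0"
    "\<not> (\<exists>c. is_chain E (A \<union> B) (Suc n) c \<and> (\<forall>\<tau>. bd (A \<union> B) c \<tau> = z \<tau>))"
    using h unfolding hom_nz_def by blast
  have z_supp: "\<forall>X. \<not> X \<subseteq> A \<union> B \<longrightarrow> z X = 0" using is_chain_vanishes[OF z(1)] by blast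
  have "tensor_bd A B (split_chain A B z) = (\<lambda>F G. 0)"
    using bd_eq_iff_split_chain[OF dj fA fB z_supp, of "\<lambda>X. 0"] z(2)
    by (simp add: split_chain_zero fun_eq_iff)
  moreover have "\<not> tensor_boundary E A B n (split_chain A B z)"
  proof
    assume "tensor_boundary E A B n (split_chain A B z)"
    then obtain c2 where c2: "tensor_chain E A B (Suc n) c2" "tensor_bd A B c2 = split_chain A B z"
      unfolding tensor_boundary_def by (auto simp: fun_eq_iff)
    define c where "c = merge_chain A B c2"
    have c_chain: "is_chain E (A \<union> B) (Suc n) c"
      unfolding c_def by (rule is_chain_merge_chain[OF dj fA fB ne c2(1)])
    have "split_chain A B c = c2" unfolding c_def by (rule split_merge_chain[OF dj c2(1)])
    then have "bd (A \<union> B) c = z"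
      using bd_eq_iff_split_chain[OF dj fA fB _ z_supp] is_chain_vanishes[OF c_chain] c2(2) by blast
    then show False using z(3) c_chain by auto
  qed
  ultimately show ?thesis
    unfolding tensor_hom_nz_def using tensor_chain_split_chain[OF dj fA fB z(1)] by auto
qed

lemma tensor_hom_nz_imp_hom_nz:
  fixes E :: "'a::linorder \<Rightarrow> 'a \<Rightarrow> bool"
  assumes dj: "A \<inter> B = {}" and fA: "finite A" and fB: "finite B" and ne: "no_edges_between E A B"
    and h: "tensor_hom_nz TYPE('k::field) E A B n"
  shows "hom_nz TYPE('k) E (A \<union> B) n"
proof -
  obtain z2 :: "'a set \<Rightarrow> 'a set \<Rightarrow> 'k" where z2: "tensor_chain E A B n z2"
    "\<forall>F G. tensor_bd A B z2 F G = 0" "\<not> tensor_boundary E A B n z2"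
    using h unfolding tensor_hom_nz_def by blast
  define z where "z = merge_chain A B z2"
  have z_chain: "is_chain E (A \<union> B) n z"
    unfolding z_def by (rule is_chain_merge_chain[OF dj fA fB ne z2(1)])
  have z_supp: "\<forall>X. \<not> X \<subseteq> A \<union> B \<longrightarrow> z X = 0" using is_chain_vanishes[OF z_chain] by blast
  have split_z: "split_chain A B z = z2" unfolding z_def by (rule split_merge_chain[OF dj z2(1)])
  have "bd (A \<union> B) z = (\<lambda>X. 0)"
    using bd_eq_iff_split_chain[OF dj fA fB z_supp, of "\<lambda>X. 0"] z2(2)
    by (simp add: split_z split_chain_zero fun_eq_iff)
  moreover have "\<not> (\<exists>c. is_chain E (A \<union> B) (Suc n) c \<and> (\<forall>\<tau>. bd (A \<union> B) c \<tau> = z \<tau>))"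
  proof
    assume "\<exists>c. is_chain E (A \<union> B) (Suc n) c \<and> (\<forall>\<tau>. bd (A \<union> B) c \<tau> = z \<tau>)"
    then obtain c where c: "is_chain E (A \<union> B) (Suc n) c" "bd (A \<union> B) c = z" by auto
    have "tensor_bd A B (split_chain A B c) = z2"
      using bd_eq_iff_split_chain[OF dj fA fB _ z_supp] is_chain_vanishes[OF c(1)] c(2) split_z by blast
    then have "tensor_boundary E A B n z2"
      unfolding tensor_boundary_def using tensor_chain_split_chain[OF dj fA fB c(1)] by auto
    then show False using z2(3) by blast
  qed
  ultimately show ?thesis
    unfolding hom_nz_def using z_chain by auto
qed

section \<open>The Kunneth formula\<close>

lemma bd_vanishes_degree:
  assumes "is_chain E A m c" "finite F" "m \<noteq> Suc (card F)"
  shows "bd A c F = 0"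
proof (rule ccontr)
  assume "bd A c F \<noteq> 0"
  then obtain v where "v \<in> A - F" "c (insert v F) \<noteq> 0" using bd_nonzeroD by blast
  then show False using assms unfolding is_chain_def by auto
qed

lemma nonboundary_functional:
  fixes z :: "'a::linorder set \<Rightarrow> 'k::field"
  assumes fA: "finite A" and zc: "is_chain E A p z"
    and nb: "\<not> (\<exists>c. is_chain E A (Suc p) c \<and> (\<forall>\<tau>. bd A c \<tau> = z \<tau>))"
  obtains f where "\<And>m c. is_chain E A m c \<Longrightarrow> (\<Sum>F\<in>{F. F \<subseteq> A \<and> card F = p}. f F * bd A c F) = 0"
    and "(\<Sum>F\<in>{F. F \<subseteq> A \<and> card F = p}. f F * z F) = 1"
proof -
  define U where "U = {bd A c | c :: 'a set \<Rightarrow> 'k. is_chain E A (Suc p) c}"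
  define D where "D = {F. F \<subseteq> A \<and> card F = p}"
  have "\<exists>f. (\<forall>u\<in>U. (\<Sum>d\<in>D. f d * u d) = 0) \<and> (\<Sum>d\<in>D. f d * z d) = 1"
  proof (rule separating_functional)
    show "finite D" unfolding D_def by (rule finite_subset[of _ "Pow A"]) (use fA in auto)
    show "\<forall>u\<in>U. \<forall>d. d \<notin> D \<longrightarrow> u d = 0"
    proof (intro ballI allI impI)
      fix u d assume "u \<in> U" "d \<notin> D"
      then obtain c where "u = bd A c" "is_chain E A (Suc p) c" unfolding U_def by blast
      then have "is_chain E A p u" using is_chain_bd by blast
      then show "u d = 0" using \<open>d \<notin> D\<close> unfolding is_chain_def D_def ind_face_def by blast
    qed
    show "\<forall>u\<in>U. \<forall>v\<in>U. (\<lambda>d. u d + v d) \<in> U"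
    proof (intro ballI)
      fix u v assume "u \<in> U" "v \<in> U"
      then obtain c1 c2 where "u = bd A c1" "is_chain E A (Suc p) c1" "v = bd A c2" "is_chain E A (Suc p) c2"
        unfolding U_def by blast
      then have "(\<lambda>d. u d + v d) = bd A (\<lambda>F. c1 F + c2 F)" "is_chain E A (Suc p) (\<lambda>F. c1 F + c2 F)"
        using is_chain_add by (auto simp: bd_add)
      then show "(\<lambda>d. u d + v d) \<in> U" unfolding U_def by blast
    qed
    show "\<forall>u\<in>U. \<forall>a. (\<lambda>d. a * u d) \<in> U"
    proof (intro ballI allI)
      fix u a assume "u \<in> U"
      then obtain c where "u = bd A c" "is_chain E A (Suc p) c" unfolding U_def by blast
      then have "(\<lambda>d. a * u d) = bd A (\<lambda>F. a * c F)" "is_chain E A (Suc p) (\<lambda>F. a * c F)"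
        using is_chain_scale by (auto simp: bd_scale)
      then show "(\<lambda>d. a * u d) \<in> U" unfolding U_def by blast
    qed
    have "(\<lambda>d. 0) = bd A (\<lambda>F. 0::'k)" by (auto simp: bd_zero)
    then show "(\<lambda>d. 0) \<in> U" unfolding U_def using is_chain_zero by blast
    show "\<forall>d. d \<notin> D \<longrightarrow> z d = 0" using zc unfolding is_chain_def D_def ind_face_def by blast
    show "z \<notin> U"
    proof
      assume "z \<in> U"
      then obtain c where "z = bd A c" "is_chain E A (Suc p) c" unfolding U_def by blast
      then show False using nb by auto
    qed
  qed
  then obtain f where f: "\<forall>u\<in>U. (\<Sum>d\<in>D. f d * u d) = 0" "(\<Sum>d\<in>D. f d * z d) = 1" by blast
  have kills: "(\<Sum>F\<in>D. f F * bd A c F) = 0" if c: "is_chain E A m c" for m c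
  proof (cases "m = Suc p")
    case True
    then show ?thesis using f(1) c unfolding U_def by blast
  next
    case False
    have "finite F" if "F \<in> D" for F using that fA finite_subset unfolding D_def by blast
    then show ?thesis using bd_vanishes_degree[OF c] False unfolding D_def by (auto intro!: sum.neutral)
  qed
  from kills f(2) show thesis unfolding D_def by (rule that)
qed

definition slant :: "'a set \<Rightarrow> nat \<Rightarrow> ('a set \<Rightarrow> 'k) \<Rightarrow> ('a set \<Rightarrow> 'a set \<Rightarrow> 'k::field) \<Rightarrow> 'a set \<Rightarrow> 'k" where
  "slant A p f c G = (\<Sum>F\<in>{F. F \<subseteq> A \<and> card F = p}. f F * c F G)"

lemma is_chain_slant:
  assumes "tensor_chain E A B (p + q) c"
  shows "is_chain E B q (slant A p f c)"
  unfolding is_chain_def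
proof (intro allI impI)
  fix G assume "slant A p f c G \<noteq> 0"
  then obtain F where "F \<in> {F. F \<subseteq> A \<and> card F = p}" "f F * c F G \<noteq> 0"
    unfolding slant_def by (rule sum.not_neutral_contains_not_neutral)
  then show "ind_face E B G \<and> card G = q" using assms unfolding tensor_chain_def by fastforce
qed

lemma bd_slant:
  fixes c :: "'a::linorder set \<Rightarrow> 'a set \<Rightarrow> 'k::field"
  assumes c: "tensor_chain E A B m c"
    and f: "\<And>m c. is_chain E A m c \<Longrightarrow> (\<Sum>F\<in>{F. F \<subseteq> A \<and> card F = p}. f F * bd A c F) = 0"
  shows "bd B (slant A p f c) G = (-1) ^ p * slant A p f (tensor_bd A B c) G"
proof -
  let ?D = "{F. F \<subseteq> A \<and> card F = p}"
  have "slant A p f (tensor_bd A B c) G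
      = (\<Sum>F\<in>?D. f F * bd A (\<lambda>F'. c F' G) F + (-1) ^ p * (f F * bd B (c F) G))"
    unfolding slant_def tensor_bd_def by (rule sum.cong) (auto simp: algebra_simps)
  also have "\<dots> = (\<Sum>F\<in>?D. f F * bd A (\<lambda>F'. c F' G) F) + (-1) ^ p * bd B (slant A p f c) G"
    unfolding slant_def bd_sum bd_scale by (simp add: sum.distrib sum_distrib_left)
  also have "(\<Sum>F\<in>?D. f F * bd A (\<lambda>F'. c F' G) F) = 0" by (rule f[OF tensor_chain_slice[OF c]])
  finally have "(-1) ^ p * slant A p f (tensor_bd A B c) G = ((-1) ^ p * (-1) ^ p) * bd B (slant A p f c) G"
    by simp
  then show ?thesis unfolding neg_one_power_square by simp
qed

text \<open>The product of two cycles that are not boundaries is not a boundary: applying the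
cocycle detecting the first factor to a bounding chain would bound the second factor.\<close>
lemma tensor_hom_nz_product:
  fixes E :: "'a::linorder \<Rightarrow> 'a \<Rightarrow> bool"
  assumes fA: "finite A"
    and hA: "hom_nz TYPE('k::field) E A p" and hB: "hom_nz TYPE('k) E B q"
  shows "tensor_hom_nz TYPE('k) E A B (p + q)"
proof -
  obtain z1 :: "'a set \<Rightarrow> 'k" where z1: "is_chain E A p z1" "\<forall>\<tau>. bd A z1 \<tau> = 0"
    "\<not> (\<exists>c. is_chain E A (Suc p) c \<and> (\<forall>\<tau>. bd A c \<tau> = z1 \<tau>))"
    using hA unfolding hom_nz_def by blast
  obtain z2 :: "'a set \<Rightarrow> 'k" where z2: "is_chain E B q z2" "\<forall>\<tau>. bd B z2 \<tau> = 0"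
    "\<not> (\<exists>c. is_chain E B (Suc q) c \<and> (\<forall>\<tau>. bd B c \<tau> = z2 \<tau>))"
    using hB unfolding hom_nz_def by blast
  obtain f where f: "\<And>m c. is_chain E A m c \<Longrightarrow> (\<Sum>F\<in>{F. F \<subseteq> A \<and> card F = p}. f F * bd A c F) = 0"
      "(\<Sum>F\<in>{F. F \<subseteq> A \<and> card F = p}. f F * z1 F) = 1"
    using nonboundary_functional[OF fA z1(1) z1(3)] by blast
  define z where "z F G = z1 F * z2 G" for F G
  have "tensor_chain E A B (p + q) z"
    using z1(1) z2(1) unfolding tensor_chain_def is_chain_def z_def by auto
  moreover have "tensor_bd A B z F G = 0" for F G
  proof -
    have swap: "(\<lambda>F'. z1 F' * z2 G) = (\<lambda>F'. z2 G * z1 F')" by (simp add: mult.commute)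
    show ?thesis using z1(2) z2(2) unfolding tensor_bd_def z_def swap bd_scale by simp
  qed
  moreover have "\<not> tensor_boundary E A B (p + q) z"
  proof
    assume "tensor_boundary E A B (p + q) z"
    then obtain c where c: "tensor_chain E A B (p + Suc q) c" "\<forall>F G. tensor_bd A B c F G = z F G"
      unfolding tensor_boundary_def by auto
    define y where "y G = (-1) ^ p * slant A p f c G" for G
    have "slant A p f (tensor_bd A B c) G = z2 G" for G
    proof -
      have "(\<Sum>F\<in>{F. F \<subseteq> A \<and> card F = p}. f F * (z1 F * z2 G))
          = (\<Sum>F\<in>{F. F \<subseteq> A \<and> card F = p}. f F * z1 F) * z2 G"
        by (simp add: sum_distrib_right mult.assoc)
      then show ?thesis using c(2) f(2) unfolding slant_def z_def by simp
    qed
    then have "bd B y G = z2 G" for G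
      using bd_slant[OF c(1) f(1)] unfolding y_def bd_scale
      by (simp add: mult.assoc[symmetric] neg_one_power_square)
    moreover have "is_chain E B (Suc q) y"
      unfolding y_def by (rule is_chain_scale[OF is_chain_slant[OF c(1)]])
    ultimately show False using z2(3) by blast
  qed
  ultimately show ?thesis unfolding tensor_hom_nz_def by blast
qed

definition level_support :: "'a set \<Rightarrow> ('a set \<Rightarrow> 'a set \<Rightarrow> 'k::zero) \<Rightarrow> nat \<Rightarrow> 'a set set" where
  "level_support B z k = {G. G \<subseteq> B \<and> card G = k \<and> (\<exists>F. z F G \<noteq> 0)}"

lemma finite_level_support: "finite B \<Longrightarrow> finite (level_support B z k)"
  unfolding level_support_def by (rule finite_subset[of _ "Pow B"]) auto

text \<open>Subtracting a boundary that agrees with \<open>z(-, G0) \<otimes> y\<close> from level \<open>k\<close> upwards removes the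
column \<open>G0\<close> from the top level \<open>k\<close> of \<open>z\<close> without creating new columns there.\<close>
lemma level_support_reduction:
  fixes z w :: "'a::linorder set \<Rightarrow> 'a set \<Rightarrow> 'k::field" and y :: "'a set \<Rightarrow> 'k"
  assumes top: "\<forall>F G. z F G \<noteq> 0 \<longrightarrow> card G \<le> k"
    and Dw: "\<And>F G. k \<le> card G \<Longrightarrow> tensor_bd A B w F G = z F G0 * y G"
    and y0: "y G0 = 1" and y_supp: "\<And>G. y G \<noteq> 0 \<Longrightarrow> card G = k \<and> (G = G0 \<or> (\<exists>F. z F G \<noteq> 0))"
  shows "\<forall>F G. z F G - tensor_bd A B w F G \<noteq> 0 \<longrightarrow> card G \<le> k"
    and "level_support B (\<lambda>F G. z F G - tensor_bd A B w F G) k \<subseteq> level_support B z k - {G0}"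
proof -
  show "\<forall>F G. z F G - tensor_bd A B w F G \<noteq> 0 \<longrightarrow> card G \<le> k"
  proof (intro allI impI)
    fix F G assume nz: "z F G - tensor_bd A B w F G \<noteq> 0"
    show "card G \<le> k"
    proof (rule ccontr)
      assume "\<not> card G \<le> k"
      then have "z F G = 0" "y G = 0" "tensor_bd A B w F G = z F G0 * y G"
        using top y_supp Dw by fastforce+
      then show False using nz by simp
    qed
  qed
  show "level_support B (\<lambda>F G. z F G - tensor_bd A B w F G) k \<subseteq> level_support B z k - {G0}"
  proof
    fix G assume "G \<in> level_support B (\<lambda>F G. z F G - tensor_bd A B w F G) k"
    then obtain F where G: "G \<subseteq> B" "card G = k" and nz: "z F G - z F G0 * y G \<noteq> 0"
      using Dw unfolding level_support_def by auto
    have "G \<noteq> G0" using nz y0 by auto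
    moreover have "\<exists>F'. z F' G \<noteq> 0"
    proof (rule ccontr)
      assume "\<not> (\<exists>F'. z F' G \<noteq> 0)"
      then have "z F G = 0" "y G = 0" using y_supp \<open>G \<noteq> G0\<close> by auto
      then show False using nz by simp
    qed
    ultimately show "G \<in> level_support B z k - {G0}" using G unfolding level_support_def by auto
  qed
qed

lemma top_column_cycle:
  fixes z :: "'a::linorder set \<Rightarrow> 'a set \<Rightarrow> 'k::field"
  assumes zc: "\<forall>F G. tensor_bd A B z F G = 0" and top: "\<forall>F G. z F G \<noteq> 0 \<longrightarrow> card G \<le> k"
    and "finite G0" "card G0 = k"
  shows "bd A (\<lambda>F. z F G0) F = 0"
proof -
  have "bd B (z F) G0 = 0"
    unfolding bd_def
  proof (intro sum.neutral ballI)
    fix v assume "v \<in> B - G0"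
    then have "card (insert v G0) = Suc k" using assms(3,4) by auto
    then have "z F (insert v G0) = 0" using top by (metis Suc_n_not_le_n)
    then show "(-1) ^ card {u\<in>G0. u < v} * z F (insert v G0) = 0" by simp
  qed
  then show ?thesis using zc unfolding tensor_bd_def by (metis add.right_neutral mult_zero_right)
qed

lemma column_reduction_boundary:
  fixes z :: "'a::linorder set \<Rightarrow> 'a set \<Rightarrow> 'k::field"
  assumes fB: "finite B" and G0: "ind_face E B G0" "card G0 = k" and pk: "p + k = n"
    and a: "is_chain E A (Suc p) a" "\<forall>\<tau>. bd A a \<tau> = z \<tau> G0"
  obtains w y where "tensor_chain E A B (Suc n) w"
    and "\<And>F G. k \<le> card G \<Longrightarrow> tensor_bd A B w F G = z F G0 * y G"
    and "y G0 = 1" and "\<And>G. y G \<noteq> 0 \<Longrightarrow> card G = k \<and> (G = G0 \<or> (\<exists>F. z F G \<noteq> 0))"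
proof -
  define w where "w F G = (if G = G0 then a F else 0)" for F G
  define y :: "'a set \<Rightarrow> 'k" where "y G = (if G = G0 then 1 else 0)" for G
  have "tensor_chain E A B (Suc n) w"
    using a(1) G0 pk unfolding tensor_chain_def is_chain_def w_def by auto
  moreover have "tensor_bd A B w F G = z F G0 * y G" if kG: "k \<le> card G" for F G
  proof -
    have "finite G0" using G0(1) fB finite_subset unfolding ind_face_def by blast
    have "bd B (w F) G = 0"
      unfolding bd_def
    proof (intro sum.neutral ballI)
      fix v assume v: "v \<in> B - G"
      have "insert v G \<noteq> G0"
      proof
        assume "insert v G = G0"
        then have "card G0 = Suc (card G)"
          using \<open>finite G0\<close> v by (metis Diff_iff card_insert_disjoint finite_insert)
        then show False using kG G0(2) by simp
      qed
      then show "(-1) ^ card {u\<in>G. u < v} * w F (insert v G) = 0" unfolding w_def by simp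
    qed
    moreover have "bd A (\<lambda>F'. w F' G) F = z F G0 * y G"
      using a(2) by (simp add: w_def y_def bd_zero)
    ultimately show ?thesis unfolding tensor_bd_def by simp
  qed
  moreover have "y G0 = 1" "\<And>G. y G \<noteq> 0 \<Longrightarrow> card G = k \<and> (G = G0 \<or> (\<exists>F. z F G \<noteq> 0))"
    using G0(2) unfolding y_def by (auto split: if_splits)
  ultimately show thesis by (rule that)
qed

text \<open>If the top column \<open>z(-, G0)\<close> is not a boundary, the slant product of \<open>z\<close> with the cocycle
detecting it is a cycle \<open>y\<close> of \<open>Ind(G[B])\<close> with \<open>y G0 = 1\<close>; since \<open>B\<close> has no homology in
that degree, \<open>y\<close> bounds some \<open>e\<close>, and \<open>z(-, G0) \<otimes> e\<close> is the correcting chain.\<close>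
lemma column_reduction_cycle:
  fixes z :: "'a::linorder set \<Rightarrow> 'a set \<Rightarrow> 'k::field"
  assumes fA: "finite A" and fB: "finite B" and zb: "tensor_chain E A B n z"
    and zc: "\<forall>F G. tensor_bd A B z F G = 0" and top: "\<forall>F G. z F G \<noteq> 0 \<longrightarrow> card G \<le> k"
    and G0: "G0 \<subseteq> B" "card G0 = k" and pk: "p + k = n"
    and col_nb: "\<not> (\<exists>a. is_chain E A (Suc p) a \<and> (\<forall>\<tau>. bd A a \<tau> = z \<tau> G0))"
    and nhB: "\<not> hom_nz TYPE('k) E B k"
  obtains w y where "tensor_chain E A B (Suc n) w"
    and "\<And>F G. k \<le> card G \<Longrightarrow> tensor_bd A B w F G = z F G0 * y G"
    and "y G0 = 1" and "\<And>G. y G \<noteq> 0 \<Longrightarrow> card G = k \<and> (G = G0 \<or> (\<exists>F. z F G \<noteq> 0))"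
proof -
  have fG0: "finite G0" using G0(1) fB finite_subset by blast
  have "n - card G0 = p" using G0(2) pk by simp
  then have col_chain: "is_chain E A p (\<lambda>F. z F G0)" using tensor_chain_slice[OF zb, of G0] by simp
  have col_cycle: "bd A (\<lambda>F. z F G0) F = 0" for F by (rule top_column_cycle[OF zc top fG0 G0(2)])
  obtain f where f: "\<And>m c. is_chain E A m c \<Longrightarrow> (\<Sum>F\<in>{F. F \<subseteq> A \<and> card F = p}. f F * bd A c F) = 0"
      "(\<Sum>F\<in>{F. F \<subseteq> A \<and> card F = p}. f F * z F G0) = 1"
    using nonboundary_functional[OF fA col_chain col_nb] by blast
  define y where "y = slant A p f z"
  have y_chain: "is_chain E B k y"
    unfolding y_def by (rule is_chain_slant) (use zb pk in simp)
  have y_cycle: "bd B y G = 0" for G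
    using bd_slant[OF zb f(1)] zc unfolding y_def slant_def by simp
  have y_nz: "\<exists>F. z F G \<noteq> 0" if nz: "y G \<noteq> 0" for G
  proof -
    obtain F where "f F * z F G \<noteq> 0"
      using nz unfolding y_def slant_def by (rule sum.not_neutral_contains_not_neutral)
    then show ?thesis by auto
  qed
  obtain e where e: "is_chain E B (Suc k) e" "\<forall>\<tau>. bd B e \<tau> = y \<tau>"
    using nhB y_chain y_cycle unfolding hom_nz_def by blast
  define w where "w F G = (-1) ^ p * z F G0 * e G" for F G
  have "tensor_chain E A B (Suc n) w"
    unfolding tensor_chain_def
  proof (intro allI impI)
    fix F G assume "w F G \<noteq> 0"
    then have "z F G0 \<noteq> 0" "e G \<noteq> 0" unfolding w_def by auto
    then have "ind_face E A F \<and> card F = p" "ind_face E B G \<and> card G = Suc k"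
      using col_chain e(1) unfolding is_chain_def by auto
    then show "ind_face E A F \<and> ind_face E B G \<and> card F + card G = Suc n" using pk by auto
  qed
  moreover have "tensor_bd A B w F G = z F G0 * y G" for F G
  proof -
    have "(\<lambda>F'. w F' G) = (\<lambda>F'. ((-1) ^ p * e G) * z F' G0)" unfolding w_def by (auto simp: algebra_simps)
    then have "bd A (\<lambda>F'. w F' G) F = 0" using col_cycle by (simp add: bd_scale)
    moreover have "(-1) ^ card F * ((-1) ^ p * z F G0 * y G) = z F G0 * y G"
    proof (cases "z F G0 = 0")
      case False
      then have "card F = p" using col_chain unfolding is_chain_def by blast
      then show ?thesis by (simp add: mult.assoc[symmetric] neg_one_power_square)
    qed simp
    ultimately show ?thesis unfolding tensor_bd_def w_def bd_scale using e(2) by simp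
  qed
  moreover have "y G0 = 1" using f(2) unfolding y_def slant_def .
  moreover have "card G = k \<and> (G = G0 \<or> (\<exists>F. z F G \<noteq> 0))" if "y G \<noteq> 0" for G
    using that y_chain y_nz unfolding is_chain_def by blast
  ultimately show thesis by (rule that)
qed

lemma tensor_cycle_level_reduction:
  fixes z :: "'a::linorder set \<Rightarrow> 'a set \<Rightarrow> 'k::field"
  assumes fA: "finite A" and fB: "finite B"
    and no_split: "\<not> (\<exists>p q. p + q = n \<and> hom_nz TYPE('k) E A p \<and> hom_nz TYPE('k) E B q)"
    and zb: "tensor_chain E A B n z" and zc: "\<forall>F G. tensor_bd A B z F G = 0"
    and top: "\<forall>F G. z F G \<noteq> 0 \<longrightarrow> card G \<le> k" and G0: "G0 \<in> level_support B z k"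
  obtains w where "tensor_chain E A B (Suc n) w"
    and "\<forall>F G. z F G - tensor_bd A B w F G \<noteq> 0 \<longrightarrow> card G \<le> k"
    and "level_support B (\<lambda>F G. z F G - tensor_bd A B w F G) k \<subseteq> level_support B z k - {G0}"
proof -
  obtain F0 where G0B: "G0 \<subseteq> B" and cG0: "card G0 = k" and F0: "z F0 G0 \<noteq> 0"
    using G0 unfolding level_support_def by blast
  then have G0_face: "ind_face E B G0" and "card F0 + k = n"
    using zb unfolding tensor_chain_def by auto
  define p where "p = n - k"
  have pk: "p + k = n" using \<open>card F0 + k = n\<close> unfolding p_def by simp
  have "\<exists>w y. tensor_chain E A B (Suc n) w \<and> (\<forall>F G. k \<le> card G \<longrightarrow> tensor_bd A B w F G = z F G0 * y G) \<and>
      y G0 = 1 \<and> (\<forall>G. y G \<noteq> 0 \<longrightarrow> card G = k \<and> (G = G0 \<or> (\<exists>F. z F G \<noteq> 0)))"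
  proof (cases "\<exists>a. is_chain E A (Suc p) a \<and> (\<forall>\<tau>. bd A a \<tau> = z \<tau> G0)")
    case True
    then obtain a where "is_chain E A (Suc p) a" "\<forall>\<tau>. bd A a \<tau> = z \<tau> G0" by blast
    from column_reduction_boundary[where z = z, OF fB G0_face cG0 pk this] show ?thesis by metis
  next
    case False
    have "n - card G0 = p" using cG0 pk by simp
    then have "is_chain E A p (\<lambda>F. z F G0)" using tensor_chain_slice[OF zb, of G0] by simp
    moreover have "\<forall>\<tau>. bd A (\<lambda>F. z F G0) \<tau> = 0"
      using top_column_cycle[OF zc top _ cG0] G0B fB finite_subset by blast
    ultimately have "hom_nz TYPE('k) E A p" using False unfolding hom_nz_def by blast
    then have "\<not> hom_nz TYPE('k) E B k" using no_split pk by blast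
    from column_reduction_cycle[OF fA fB zb zc top G0B cG0 pk False this] show ?thesis by metis
  qed
  then obtain w y where w: "tensor_chain E A B (Suc n) w"
    "\<And>F G. k \<le> card G \<Longrightarrow> tensor_bd A B w F G = z F G0 * y G"
    "y G0 = 1" "\<And>G. y G \<noteq> 0 \<Longrightarrow> card G = k \<and> (G = G0 \<or> (\<exists>F. z F G \<noteq> 0))"
    by blast
  show thesis using that[OF w(1)] level_support_reduction[OF top w(2-4)] by blast
qed

text \<open>The columns on the top level of the second factor are removed one at a time.\<close>
lemma tensor_cycle_boundary_level:
  fixes z :: "'a::linorder set \<Rightarrow> 'a set \<Rightarrow> 'k::field"
  assumes fA: "finite A" and fB: "finite B"
    and no_split: "\<not> (\<exists>p q. p + q = n \<and> hom_nz TYPE('k) E A p \<and> hom_nz TYPE('k) E B q)"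
    and lower: "\<And>z :: 'a set \<Rightarrow> 'a set \<Rightarrow> 'k. tensor_chain E A B n z \<Longrightarrow> \<forall>F G. tensor_bd A B z F G = 0 \<Longrightarrow>
      \<forall>F G. z F G \<noteq> 0 \<longrightarrow> card G < k \<Longrightarrow> tensor_boundary E A B n z"
  shows "tensor_chain E A B n z \<Longrightarrow> \<forall>F G. tensor_bd A B z F G = 0 \<Longrightarrow>
      \<forall>F G. z F G \<noteq> 0 \<longrightarrow> card G \<le> k \<Longrightarrow> tensor_boundary E A B n z"
proof (induction "card (level_support B z k)" arbitrary: z rule: less_induct)
  case less
  note zb = less.prems(1) and zc = less.prems(2) and top = less.prems(3)
  show ?case
  proof (cases "level_support B z k = {}")
    case True
    have "card G < k" if "z F G \<noteq> 0" for F G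
    proof -
      have "G \<subseteq> B" using zb that unfolding tensor_chain_def ind_face_def by blast
      then have "card G \<noteq> k" using True that unfolding level_support_def by blast
      then show ?thesis using top that by fastforce
    qed
    then show ?thesis using lower zb zc by blast
  next
    case False
    then obtain G0 where G0: "G0 \<in> level_support B z k" by blast
    obtain w where w: "tensor_chain E A B (Suc n) w"
      "\<forall>F G. z F G - tensor_bd A B w F G \<noteq> 0 \<longrightarrow> card G \<le> k"
      "level_support B (\<lambda>F G. z F G - tensor_bd A B w F G) k \<subseteq> level_support B z k - {G0}"
      using tensor_cycle_level_reduction[OF fA fB no_split zb zc top G0] by blast
    define z' where "z' F G = z F G - tensor_bd A B w F G" for F G
    have z'_chain: "tensor_chain E A B n z'"
      unfolding z'_def by (rule tensor_chain_diff[OF zb tensor_chain_tensor_bd[OF w(1) fA fB]])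
    have z'_cycle: "\<forall>F G. tensor_bd A B z' F G = 0"
      using zc tensor_bd_tensor_bd[OF w(1) fA fB] unfolding z'_def tensor_bd_diff by simp
    have "card (level_support B z' k) \<le> card (level_support B z k - {G0})"
      using w(3) finite_level_support[OF fB] unfolding z'_def by (intro card_mono) auto
    also have "\<dots> < card (level_support B z k)"
      using G0 finite_level_support[OF fB] by (intro card_Diff1_less)
    finally have "tensor_boundary E A B n z'"
      using less.hyps z'_chain z'_cycle w(2) unfolding z'_def by blast
    then obtain c where c: "tensor_chain E A B (Suc n) c" "\<forall>F G. tensor_bd A B c F G = z' F G"
      unfolding tensor_boundary_def by blast
    show ?thesis
      unfolding tensor_boundary_def
    proof (intro exI conjI allI)
      show "tensor_chain E A B (Suc n) (\<lambda>F G. c F G + w F G)" by (rule tensor_chain_add[OF c(1) w(1)])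
      fix F G
      show "tensor_bd A B (\<lambda>F G. c F G + w F G) F G = z F G"
        unfolding tensor_bd_add using c(2) unfolding z'_def by simp
    qed
  qed
qed

lemma tensor_cycle_is_boundary:
  fixes z :: "'a::linorder set \<Rightarrow> 'a set \<Rightarrow> 'k::field"
  assumes fA: "finite A" and fB: "finite B"
    and no_split: "\<not> (\<exists>p q. p + q = n \<and> hom_nz TYPE('k) E A p \<and> hom_nz TYPE('k) E B q)"
    and zb: "tensor_chain E A B n z" and zc: "\<forall>F G. tensor_bd A B z F G = 0"
  shows "tensor_boundary E A B n z"
proof -
  have "\<forall>z :: 'a set \<Rightarrow> 'a set \<Rightarrow> 'k. tensor_chain E A B n z \<longrightarrow> (\<forall>F G. tensor_bd A B z F G = 0) \<longrightarrow>
      (\<forall>F G. z F G \<noteq> 0 \<longrightarrow> card G < k) \<longrightarrow> tensor_boundary E A B n z" for k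
  proof (induction k)
    case 0
    have "tensor_boundary E A B n (\<lambda>F G. 0 :: 'k)"
      unfolding tensor_boundary_def using tensor_chain_zero tensor_bd_zero by blast
    then show ?case by (simp add: fun_eq_iff[symmetric])
  next
    case (Suc k)
    show ?case
      using tensor_cycle_boundary_level[OF fA fB no_split, of k] Suc.IH by (simp add: less_Suc_eq_le)
  qed
  moreover have "\<forall>F G. z F G \<noteq> 0 \<longrightarrow> card G < Suc n" using zb unfolding tensor_chain_def by fastforce
  ultimately show ?thesis using zb zc by blast
qed

lemma tensor_hom_nz_iff:
  fixes E :: "'a::linorder \<Rightarrow> 'a \<Rightarrow> bool"
  assumes "finite A" "finite B"
  shows "tensor_hom_nz TYPE('k::field) E A B n \<longleftrightarrow>
    (\<exists>p q. p + q = n \<and> hom_nz TYPE('k) E A p \<and> hom_nz TYPE('k) E B q)"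
  using tensor_cycle_is_boundary[OF assms] tensor_hom_nz_product[OF assms(1)]
  unfolding tensor_hom_nz_def by blast

lemma hom_nz_Un_iff:
  fixes E :: "'a::linorder \<Rightarrow> 'a \<Rightarrow> bool"
  assumes "A \<inter> B = {}" "finite A" "finite B" "no_edges_between E A B"
  shows "hom_nz TYPE('k::field) E (A \<union> B) n \<longleftrightarrow>
    (\<exists>p q. p + q = n \<and> hom_nz TYPE('k) E A p \<and> hom_nz TYPE('k) E B q)"
  using hom_nz_imp_tensor_hom_nz[OF assms] tensor_hom_nz_imp_hom_nz[OF assms]
    tensor_hom_nz_iff[OF assms(2,3)] by blast

section \<open>Additivity of regularity\<close>

lemma hom_nz_le_card:
  fixes E :: "'a::linorder \<Rightarrow> 'a \<Rightarrow> bool"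
  assumes "finite S" "hom_nz TYPE('k::field) E S j"
  shows "j \<le> card S"
proof -
  obtain z :: "'a set \<Rightarrow> 'k" where z: "is_chain E S j z"
      "\<not> (\<exists>c. is_chain E S (Suc j) c \<and> (\<forall>\<tau>. bd S c \<tau> = z \<tau>))"
    using assms(2) unfolding hom_nz_def by blast
  have "\<exists>F. z F \<noteq> 0"
  proof (rule ccontr)
    assume "\<not> (\<exists>F. z F \<noteq> 0)"
    then have "\<forall>\<tau>. bd S (\<lambda>F. 0) \<tau> = z \<tau>" by (simp add: bd_zero)
    then show False using z(2) is_chain_zero by blast
  qed
  then obtain F where "F \<subseteq> S" "card F = j" using z(1) unfolding is_chain_def ind_face_def by blast
  then show ?thesis using assms(1) card_mono by blast
qed

text \<open>The empty face spans the reduced homology \<open>H_{-1}\<close> of the void complex.\<close>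
lemma hom_nz_empty: "hom_nz TYPE('k::field) E {} 0"
  unfolding hom_nz_def
proof (intro exI conjI allI)
  define z :: "'a set \<Rightarrow> 'k" where "z F = (if F = {} then 1 else 0)" for F
  show "is_chain E {} 0 z" unfolding is_chain_def z_def ind_face_def by auto
  show "bd {} z \<tau> = 0" for \<tau> unfolding bd_def by simp
  show "\<not> (\<exists>c. is_chain E {} (Suc 0) c \<and> (\<forall>\<tau>. bd {} c \<tau> = z \<tau>))"
  proof
    assume "\<exists>c. is_chain E {} (Suc 0) c \<and> (\<forall>\<tau>. bd {} c \<tau> = z \<tau>)"
    then obtain c :: "'a set \<Rightarrow> 'k" where "bd {} c {} = z {}" by blast
    then show False unfolding bd_def z_def by simp
  qed
qed

lemma finite_hom_nz_degrees:
  fixes E :: "'a::linorder \<Rightarrow> 'a \<Rightarrow> bool"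
  assumes "finite V"
  shows "finite {j. \<exists>S\<subseteq>V. hom_nz TYPE('k::field) E S j}"
proof (rule finite_subset[of _ "{..card V}"])
  show "{j. \<exists>S\<subseteq>V. hom_nz TYPE('k) E S j} \<subseteq> {..card V}"
  proof
    fix j assume "j \<in> {j. \<exists>S\<subseteq>V. hom_nz TYPE('k) E S j}"
    then obtain S where "S \<subseteq> V" "hom_nz TYPE('k) E S j" by blast
    then have "j \<le> card S" using hom_nz_le_card assms finite_subset by blast
    also have "\<dots> \<le> card V" using \<open>S \<subseteq> V\<close> assms card_mono by blast
    finally show "j \<in> {..card V}" by simp
  qed
qed simp

lemma hom_nz_le_reg:
  fixes E :: "'a::linorder \<Rightarrow> 'a \<Rightarrow> bool"
  assumes "finite V" "S \<subseteq> V" "hom_nz TYPE('k::field) E S j"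
  shows "j \<le> reg TYPE('k) E V"
  unfolding reg_def using assms finite_hom_nz_degrees[OF assms(1)] by (intro Max_ge) auto

lemma reg_attained:
  fixes E :: "'a::linorder \<Rightarrow> 'a \<Rightarrow> bool"
  assumes "finite V"
  obtains S where "S \<subseteq> V" "hom_nz TYPE('k::field) E S (reg TYPE('k) E V)"
proof -
  have "0 \<in> {j. \<exists>S\<subseteq>V. hom_nz TYPE('k) E S j}" using hom_nz_empty by blast
  then have "reg TYPE('k) E V \<in> {j. \<exists>S\<subseteq>V. hom_nz TYPE('k) E S j}"
    unfolding reg_def using finite_hom_nz_degrees[OF assms] by (intro Max_in) auto
  then show thesis using that by blast
qed

lemma reg_mono:
  fixes E :: "'a::linorder \<Rightarrow> 'a \<Rightarrow> bool"
  assumes "finite V" "T \<subseteq> V"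
  shows "reg TYPE('k::field) E T \<le> reg TYPE('k) E V"
proof -
  obtain S where "S \<subseteq> T" "hom_nz TYPE('k) E S (reg TYPE('k) E T)"
    using reg_attained finite_subset[OF assms(2,1)] by blast
  then show ?thesis using hom_nz_le_reg[OF assms(1)] assms(2) by blast
qed

lemma reg_empty: "reg TYPE('k::field) (E :: 'a::linorder \<Rightarrow> 'a \<Rightarrow> bool) {} = 0"
proof -
  obtain S where "S \<subseteq> {}" "hom_nz TYPE('k) E S (reg TYPE('k) E {})" using reg_attained[of "{}"] by blast
  then show ?thesis using hom_nz_le_card[of S] by auto
qed

lemma reg_Un:
  fixes E :: "'a::linorder \<Rightarrow> 'a \<Rightarrow> bool"
  assumes dj: "A \<inter> B = {}" and fA: "finite A" and fB: "finite B" and ne: "no_edges_between E A B"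
  shows "reg TYPE('k::field) E (A \<union> B) = reg TYPE('k) E A + reg TYPE('k) E B"
proof (rule antisym)
  obtain S where S: "S \<subseteq> A \<union> B" "hom_nz TYPE('k) E S (reg TYPE('k) E (A \<union> B))"
    using reg_attained[of "A \<union> B"] fA fB by blast
  have "S = (S \<inter> A) \<union> (S \<inter> B)" using S(1) by auto
  then have "hom_nz TYPE('k) E ((S \<inter> A) \<union> (S \<inter> B)) (reg TYPE('k) E (A \<union> B))" using S(2) by simp
  moreover have "(S \<inter> A) \<inter> (S \<inter> B) = {}" "finite (S \<inter> A)" "finite (S \<inter> B)"
    "no_edges_between E (S \<inter> A) (S \<inter> B)"
    using dj fA fB no_edges_between_mono[OF ne] by auto
  ultimately obtain p q where "p + q = reg TYPE('k) E (A \<union> B)"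
      "hom_nz TYPE('k) E (S \<inter> A) p" "hom_nz TYPE('k) E (S \<inter> B) q"
    using hom_nz_Un_iff by blast
  moreover have "p \<le> reg TYPE('k) E A" using hom_nz_le_reg[OF fA _ \<open>hom_nz TYPE('k) E (S \<inter> A) p\<close>] by blast
  moreover have "q \<le> reg TYPE('k) E B" using hom_nz_le_reg[OF fB _ \<open>hom_nz TYPE('k) E (S \<inter> B) q\<close>] by blast
  ultimately show "reg TYPE('k) E (A \<union> B) \<le> reg TYPE('k) E A + reg TYPE('k) E B" by simp
next
  obtain S1 where S1: "S1 \<subseteq> A" "hom_nz TYPE('k) E S1 (reg TYPE('k) E A)" using reg_attained[OF fA] by blast
  obtain S2 where S2: "S2 \<subseteq> B" "hom_nz TYPE('k) E S2 (reg TYPE('k) E B)" using reg_attained[OF fB] by blast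
  have "S1 \<inter> S2 = {}" "finite S1" "finite S2" "no_edges_between E S1 S2"
    using S1(1) S2(1) dj fA fB no_edges_between_mono[OF ne S1(1) S2(1)] finite_subset by auto
  then have "hom_nz TYPE('k) E (S1 \<union> S2) (reg TYPE('k) E A + reg TYPE('k) E B)"
    using hom_nz_Un_iff S1(2) S2(2) by blast
  moreover have "S1 \<union> S2 \<subseteq> A \<union> B" using S1 S2 by auto
  ultimately show "reg TYPE('k) E A + reg TYPE('k) E B \<le> reg TYPE('k) E (A \<union> B)"
    using hom_nz_le_reg fA fB by blast
qed

lemma reg_Union:
  fixes E :: "'a::linorder \<Rightarrow> 'a \<Rightarrow> bool"
  assumes "finite \<H>" "\<forall>W\<in>\<H>. finite W"
    and "\<forall>W1\<in>\<H>. \<forall>W2\<in>\<H>. W1 \<noteq> W2 \<longrightarrow> W1 \<inter> W2 = {} \<and> (\<forall>u\<in>W1. \<forall>v\<in>W2. \<not> E u v)"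
  shows "reg TYPE('k::field) E (\<Union>\<H>) = (\<Sum>W\<in>\<H>. reg TYPE('k) E W)"
  using assms
proof (induction \<H> rule: finite_induct)
  case empty
  show ?case using reg_empty by simp
next
  case (insert W \<H>)
  have pw: "W \<inter> W' = {} \<and> (\<forall>u\<in>W. \<forall>v\<in>W'. \<not> E u v) \<and> (\<forall>u\<in>W'. \<forall>v\<in>W. \<not> E u v)"
    if "W' \<in> \<H>" for W'
  proof -
    have ne: "W \<noteq> W'" using that insert.hyps(2) by blast
    have "W \<inter> W' = {} \<and> (\<forall>u\<in>W. \<forall>v\<in>W'. \<not> E u v)"
      using insert.prems(2)[rule_format, of W W'] that ne by simp
    moreover have "W' \<inter> W = {} \<and> (\<forall>u\<in>W'. \<forall>v\<in>W. \<not> E u v)"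
      using insert.prems(2)[rule_format, of W' W] that ne by simp
    ultimately show ?thesis by blast
  qed
  then have dj: "W \<inter> \<Union>\<H> = {}" and ne: "no_edges_between E W (\<Union>\<H>)"
    unfolding no_edges_between_def by blast+
  have "finite W" "finite (\<Union>\<H>)" using insert.prems(1) insert.hyps(1) by auto
  then have "reg TYPE('k) E (W \<union> \<Union>\<H>) = reg TYPE('k) E W + reg TYPE('k) E (\<Union>\<H>)"
    using reg_Un[OF dj _ _ ne] by blast
  also have "reg TYPE('k) E (\<Union>\<H>) = (\<Sum>W\<in>\<H>. reg TYPE('k) E W)"
    using insert.IH insert.prems by blast
  finally show ?case using insert.hyps by simp
qed

section \<open>Prime decompositions\<close>

definition reg_critical :: "'k::field itself \<Rightarrow> ('a::linorder \<Rightarrow> 'a \<Rightarrow> bool) \<Rightarrow> 'a set \<Rightarrow> bool" where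
  "reg_critical K E S \<longleftrightarrow> (\<forall>x\<in>S. reg K E (S - {x}) < reg K E S)"

lemma reg_critical_Un_left:
  fixes E :: "'a::linorder \<Rightarrow> 'a \<Rightarrow> bool"
  assumes dj: "A \<inter> B = {}" and fA: "finite A" and fB: "finite B" and ne: "no_edges_between E A B"
    and crit: "reg_critical TYPE('k::field) E (A \<union> B)"
  shows "reg_critical TYPE('k) E A"
  unfolding reg_critical_def
proof
  fix x assume x: "x \<in> A"
  have "(A \<union> B) - {x} = (A - {x}) \<union> B" using x dj by auto
  then have "reg TYPE('k) E ((A \<union> B) - {x}) = reg TYPE('k) E (A - {x}) + reg TYPE('k) E B"
    using reg_Un[of "A - {x}" B] dj fA fB no_edges_between_mono[OF ne, of "A - {x}" B] by auto
  moreover have "reg TYPE('k) E ((A \<union> B) - {x}) < reg TYPE('k) E (A \<union> B)"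
    using crit x unfolding reg_critical_def by blast
  ultimately show "reg TYPE('k) E (A - {x}) < reg TYPE('k) E A"
    using reg_Un[OF assms(1-4), where 'k = 'k] by simp
qed

lemma disconnected_split:
  assumes sym: "\<And>u v. E u v \<Longrightarrow> E v u" and "S \<noteq> {}" "\<not> connected_graph E S"
  obtains A B where "A \<noteq> {}" "B \<noteq> {}" "A \<inter> B = {}" "S = A \<union> B" "no_edges_between E A B"
proof -
  define R where "R = (\<lambda>x y. x \<in> S \<and> y \<in> S \<and> E x y)"
  obtain u v where uv: "u \<in> S" "v \<in> S" "\<not> R\<^sup>*\<^sup>* u v"
    using assms(2,3) unfolding connected_graph_def R_def by blast
  define A where "A = {w\<in>S. R\<^sup>*\<^sup>* u w}"
  have ne: "no_edges_between E A (S - A)"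
    unfolding no_edges_between_def
  proof (intro ballI conjI)
    fix a b assume a: "a \<in> A" and b: "b \<in> S - A"
    show ab: "\<not> E a b"
    proof
      assume "E a b"
      then have "R a b" using a b unfolding R_def A_def by auto
      moreover have "R\<^sup>*\<^sup>* u a" using a unfolding A_def by simp
      ultimately have "R\<^sup>*\<^sup>* u b" by (metis rtranclp.rtrancl_into_rtrancl)
      then show False using b unfolding A_def by auto
    qed
    then show "\<not> E b a" using sym by blast
  qed
  have "A \<noteq> {}" "S - A \<noteq> {}" "A \<inter> (S - A) = {}" "S = A \<union> (S - A)"
    using uv unfolding A_def by auto
  from this ne show thesis by (rule that)
qed

lemma prime_graph_nonempty: "prime_graph K E W \<Longrightarrow> W \<noteq> {}"
  unfolding prime_graph_def connected_graph_def by simp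

lemma prime_decomp_subset_Pow: "prime_decomp K E V \<H> \<Longrightarrow> \<H> \<subseteq> Pow V"
  unfolding prime_decomp_def by auto

lemma finite_prime_decomp: "finite V \<Longrightarrow> prime_decomp K E V \<H> \<Longrightarrow> finite \<H>"
  using finite_subset[OF prime_decomp_subset_Pow finite_Pow_iff[THEN iffD2]] by blast

lemma prime_decomp_Un:
  assumes dj: "A \<inter> B = {}" and ne: "no_edges_between E A B"
    and HA: "prime_decomp K E A \<H>A" and HB: "prime_decomp K E B \<H>B"
  shows "prime_decomp K E (A \<union> B) (\<H>A \<union> \<H>B)" and "\<H>A \<inter> \<H>B = {}"
proof -
  have HA1: "\<forall>W\<in>\<H>A. W \<subseteq> A \<and> prime_graph K E W"
    and HA2: "\<forall>W1\<in>\<H>A. \<forall>W2\<in>\<H>A. W1 \<noteq> W2 \<longrightarrow> W1 \<inter> W2 = {} \<and> (\<forall>u\<in>W1. \<forall>v\<in>W2. \<not> E u v)"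
    using HA unfolding prime_decomp_def by auto
  have HB1: "\<forall>W\<in>\<H>B. W \<subseteq> B \<and> prime_graph K E W"
    and HB2: "\<forall>W1\<in>\<H>B. \<forall>W2\<in>\<H>B. W1 \<noteq> W2 \<longrightarrow> W1 \<inter> W2 = {} \<and> (\<forall>u\<in>W1. \<forall>v\<in>W2. \<not> E u v)"
    using HB unfolding prime_decomp_def by auto
  have across: "W1 \<inter> W2 = {} \<and> (\<forall>u\<in>W1. \<forall>v\<in>W2. \<not> E u v)"
    if "W1 \<subseteq> A \<and> W2 \<subseteq> B \<or> W1 \<subseteq> B \<and> W2 \<subseteq> A" for W1 W2
    using that dj ne unfolding no_edges_between_def by blast
  have "\<forall>W1\<in>\<H>A \<union> \<H>B. \<forall>W2\<in>\<H>A \<union> \<H>B. W1 \<noteq> W2 \<longrightarrow> W1 \<inter> W2 = {} \<and> (\<forall>u\<in>W1. \<forall>v\<in>W2. \<not> E u v)"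
  proof (intro ballI impI)
    fix W1 W2 assume W: "W1 \<in> \<H>A \<union> \<H>B" "W2 \<in> \<H>A \<union> \<H>B" "W1 \<noteq> W2"
    then consider "W1 \<in> \<H>A" "W2 \<in> \<H>A" | "W1 \<in> \<H>B" "W2 \<in> \<H>B"
      | "W1 \<in> \<H>A" "W2 \<in> \<H>B" | "W1 \<in> \<H>B" "W2 \<in> \<H>A"
      by blast
    then show "W1 \<inter> W2 = {} \<and> (\<forall>u\<in>W1. \<forall>v\<in>W2. \<not> E u v)"
    proof cases
      case 1
      then show ?thesis using HA2 W(3) by blast
    next
      case 2
      then show ?thesis using HB2 W(3) by blast
    next
      case 3
      then show ?thesis using HA1 HB1 by (intro across) blast
    next
      case 4
      then show ?thesis using HA1 HB1 by (intro across) blast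
    qed
  qed
  moreover have "\<forall>W\<in>\<H>A \<union> \<H>B. W \<subseteq> A \<union> B \<and> prime_graph K E W" using HA1 HB1 by blast
  ultimately show "prime_decomp K E (A \<union> B) (\<H>A \<union> \<H>B)" unfolding prime_decomp_def by blast
  show "\<H>A \<inter> \<H>B = {}"
  proof (rule ccontr)
    assume "\<H>A \<inter> \<H>B \<noteq> {}"
    then obtain W where W: "W \<in> \<H>A" "W \<in> \<H>B" by blast
    then have "W \<subseteq> A \<inter> B" using HA1 HB1 by blast
    moreover have "W \<noteq> {}" using W(1) HA1 prime_graph_nonempty by blast
    ultimately show False using dj by blast
  qed
qed

text \<open>A critical graph splits along a disconnection into two critical graphs of the same total
regularity, so induction on the number of vertices ends at connected critical graphs, i.e. primes.\<close>
lemma reg_critical_prime_decomp: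
  fixes E :: "'a::linorder \<Rightarrow> 'a \<Rightarrow> bool"
  assumes sym: "\<And>u v. E u v \<Longrightarrow> E v u"
  shows "finite S \<Longrightarrow> reg_critical TYPE('k::field) E S \<Longrightarrow>
    \<exists>\<H>. prime_decomp TYPE('k) E S \<H> \<and> (\<Sum>W\<in>\<H>. reg TYPE('k) E W) = reg TYPE('k) E S"
proof (induction "card S" arbitrary: S rule: less_induct)
  case less
  consider "S = {}" | "connected_graph E S" | "S \<noteq> {}" "\<not> connected_graph E S" by blast
  then show ?case
  proof cases
    case 1
    then have "prime_decomp TYPE('k) E S {}" "reg TYPE('k) E S = 0"
      using reg_empty unfolding prime_decomp_def by auto
    then show ?thesis by force
  next
    case 2
    then have "prime_graph TYPE('k) E S"
      using less.prems(2) unfolding prime_graph_def reg_critical_def by blast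
    then have "prime_decomp TYPE('k) E S {S}" unfolding prime_decomp_def by blast
    then show ?thesis by force
  next
    case 3
    obtain A B where AB: "A \<noteq> {}" "B \<noteq> {}" "A \<inter> B = {}" "S = A \<union> B" "no_edges_between E A B"
      by (rule disconnected_split[OF sym 3])
    have fA: "finite A" and fB: "finite B" using less.prems(1) AB(4) by auto
    have "A \<subset> S" "B \<subset> S" using AB by blast+
    then have cA: "card A < card S" and cB: "card B < card S"
      using psubset_card_mono[OF less.prems(1)] by blast+
    have critS: "reg_critical TYPE('k) E (A \<union> B)" using less.prems(2) AB(4) by simp
    have critA: "reg_critical TYPE('k) E A" by (rule reg_critical_Un_left[OF AB(3) fA fB AB(5) critS])
    have "B \<inter> A = {}" "no_edges_between E B A" "reg_critical TYPE('k) E (B \<union> A)"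
      using AB(3) AB(5) critS by (auto simp: no_edges_between_commute Un_commute)
    then have critB: "reg_critical TYPE('k) E B" using reg_critical_Un_left fB fA by blast
    obtain \<H>A where HA: "prime_decomp TYPE('k) E A \<H>A" "(\<Sum>W\<in>\<H>A. reg TYPE('k) E W) = reg TYPE('k) E A"
      using less.hyps[OF cA fA critA] by blast
    obtain \<H>B where HB: "prime_decomp TYPE('k) E B \<H>B" "(\<Sum>W\<in>\<H>B. reg TYPE('k) E W) = reg TYPE('k) E B"
      using less.hyps[OF cB fB critB] by blast
    have "(\<Sum>W\<in>\<H>A \<union> \<H>B. reg TYPE('k) E W) = (\<Sum>W\<in>\<H>A. reg TYPE('k) E W) + (\<Sum>W\<in>\<H>B. reg TYPE('k) E W)"
      by (rule sum.union_disjoint[OF finite_prime_decomp[OF fA HA(1)] finite_prime_decomp[OF fB HB(1)]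
            prime_decomp_Un(2)[OF AB(3,5) HA(1) HB(1)]])
    also have "\<dots> = reg TYPE('k) E S" unfolding HA(2) HB(2) AB(4) by (rule reg_Un[OF AB(3) fA fB AB(5), symmetric])
    finally show ?thesis using prime_decomp_Un(1)[OF AB(3,5) HA(1) HB(1)] AB(4) by blast
  qed
qed

lemma exists_reg_critical_subset:
  fixes E :: "'a::linorder \<Rightarrow> 'a \<Rightarrow> bool"
  assumes "finite V"
  obtains S where "S \<subseteq> V" "reg TYPE('k::field) E S = reg TYPE('k) E V" "reg_critical TYPE('k) E S"
proof -
  obtain S where S: "S \<subseteq> V \<and> reg TYPE('k) E S = reg TYPE('k) E V"
    and least: "\<forall>T. T \<subseteq> V \<and> reg TYPE('k) E T = reg TYPE('k) E V \<longrightarrow> card S \<le> card T"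
    using ex_has_least_nat[of "\<lambda>T. T \<subseteq> V \<and> reg TYPE('k) E T = reg TYPE('k) E V" V card] by blast
  have fS: "finite S" using S assms finite_subset by blast
  have "reg TYPE('k) E (S - {x}) < reg TYPE('k) E S" if x: "x \<in> S" for x
  proof -
    have "card (S - {x}) < card S" by (rule card_Diff1_less[OF fS x])
    moreover have "S - {x} \<subseteq> V" using S by blast
    ultimately have "reg TYPE('k) E (S - {x}) \<noteq> reg TYPE('k) E S"
      using S least[rule_format, of "S - {x}"] by auto
    moreover have "reg TYPE('k) E (S - {x}) \<le> reg TYPE('k) E S" by (rule reg_mono[OF fS]) blast
    ultimately show ?thesis by simp
  qed
  then have "reg_critical TYPE('k) E S" unfolding reg_critical_def by blast
  with S show thesis using that by blast
qed

lemma sum_reg_prime_decomp_le: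
  fixes E :: "'a::linorder \<Rightarrow> 'a \<Rightarrow> bool"
  assumes fV: "finite V" and H: "prime_decomp TYPE('k::field) E V \<H>"
  shows "(\<Sum>W\<in>\<H>. reg TYPE('k) E W) \<le> reg TYPE('k) E V"
proof -
  have sub: "\<H> \<subseteq> Pow V" by (rule prime_decomp_subset_Pow[OF H])
  have "\<forall>W\<in>\<H>. finite W" using sub fV finite_subset by blast
  moreover have "\<forall>W1\<in>\<H>. \<forall>W2\<in>\<H>. W1 \<noteq> W2 \<longrightarrow> W1 \<inter> W2 = {} \<and> (\<forall>u\<in>W1. \<forall>v\<in>W2. \<not> E u v)"
    using H unfolding prime_decomp_def by blast
  ultimately have "reg TYPE('k) E (\<Union>\<H>) = (\<Sum>W\<in>\<H>. reg TYPE('k) E W)"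
    by (rule reg_Union[OF finite_prime_decomp[OF fV H]])
  moreover have "reg TYPE('k) E (\<Union>\<H>) \<le> reg TYPE('k) E V" using reg_mono[OF fV] sub by blast
  ultimately show ?thesis by simp
qed

theorem theorem1p1:
  fixes E :: "'a::linorder \<Rightarrow> 'a \<Rightarrow> bool" and V :: "'a set"
  assumes "finite V"
    and "\<And>u v. E u v \<Longrightarrow> E v u"
    and "\<And>v. \<not> E v v"
  shows "reg TYPE('k::field) E V =
    Max {(\<Sum>W\<in>\<H>. reg TYPE('k) E W) | \<H>. prime_decomp TYPE('k) E V \<H>}"
proof -
  let ?M = "{(\<Sum>W\<in>\<H>. reg TYPE('k) E W) | \<H>. prime_decomp TYPE('k) E V \<H>}"
  have "?M \<subseteq> (\<lambda>\<H>. \<Sum>W\<in>\<H>. reg TYPE('k) E W) ` Pow (Pow V)"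
    using prime_decomp_subset_Pow by blast
  moreover have "finite ((\<lambda>\<H>. \<Sum>W\<in>\<H>. reg TYPE('k) E W) ` Pow (Pow V))" using assms(1) by simp
  ultimately have "finite ?M" by (rule finite_subset)
  obtain S where S: "S \<subseteq> V" "reg TYPE('k) E S = reg TYPE('k) E V" "reg_critical TYPE('k) E S"
    using exists_reg_critical_subset[OF assms(1)] by blast
  then obtain \<H> where "prime_decomp TYPE('k) E S \<H>" "(\<Sum>W\<in>\<H>. reg TYPE('k) E W) = reg TYPE('k) E V"
    using reg_critical_prime_decomp[where E = E, OF assms(2) finite_subset[OF S(1) assms(1)] S(3)] S(2)
    by auto
  then have "prime_decomp TYPE('k) E V \<H>" "reg TYPE('k) E V = (\<Sum>W\<in>\<H>. reg TYPE('k) E W)"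
    using S(1) unfolding prime_decomp_def by auto
  then have "reg TYPE('k) E V \<in> ?M" by blast
  moreover have "y \<le> reg TYPE('k) E V" if "y \<in> ?M" for y
    using that sum_reg_prime_decomp_le[OF assms(1)] by blast
  ultimately show ?thesis using \<open>finite ?M\<close> by (intro Max_eqI[symmetric])
qed

end
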